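(* Let $\varphi=\nu\tilde n.\sigma$ be a frame well-formed with respect to $\mathtt{s}\in\tilde n$ such that $\varphi\nvdash\mathtt{s}$. Let $U$ be a term with all variables in $\mathrm{dom}(\varphi)$ and $M$ a closed term in normal form, such that $U$ and $M$ are public with respect to $\varphi$. If $U\sigma[\mathtt{s}/M]\rightarrow V$ for some term $V$, then there exists a frame $\varphi'=\nu\tilde n.\sigma'$ well-formed with respect to $\mathtt{s}$ such that: $x\sigma'=x\sigma$ for all $x\in\mathrm{dom}(\sigma)$; for every term $W$, $\varphi\vdash W$ iff $\varphi'\vdash W$; and $V=V'\sigma'[\mathtt{s}/M]$ and $U\sigma\rightarrow V'\sigma'$ for some term $V'$ public with respect to $\varphi'$.
   Context: Terms over $\Sigma=\{\mathsf{enc}/3,\mathsf{dec}/2,\mathsf{enca}/3,\mathsf{deca}/2,\mathsf{pub}/1,\mathsf{priv}/1,\langle\cdot,\cdot\rangle/2,\pi_1/1,\pi_2/1,\mathsf{sign}/2,\mathsf{check}/3,\mathsf{retrieve}/1\}$, constants (including $\mathsf{ok}$), names and variables; destructors are $\pi_1,\pi_2,\mathsf{dec},\mathsf{deca},\mathsf{check},\mathsf{retrieve}$. The rewrite system $\mathcal R_E$ consists of $\pi_i(\langle z_1,z_2\rangle)\to z_i$ ($i=1,2$), $\mathsf{dec}(\mathsf{enc}(z_1,z_2,z_3),z_2)\to z_1$, $\mathsf{deca}(\mathsf{enca}(z_1,\mathsf{pub}(z_2),z_3),\mathsf{priv}(z_2))\to z_1$, $\mathsf{check}(z_1,\mathsf{sign}(z_1,\mathsf{priv}(z_2)),\mathsf{pub}(z_2))\to\mathsf{ok}$,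 $\mathsf{retrieve}(\mathsf{sign}(z_1,z_2))\to z_1$; it is convergent, $=_E$ is its induced equality, and $U\to V$ denotes one rewrite step at some position. A frame $\varphi=\nu\tilde n.\sigma$: finite set of restricted names $\tilde n$ and acyclic substitution $\sigma$. Public term w.r.t. $\varphi$: contains no name of $\tilde n$ and no $\mathsf{priv}$. $\varphi\vdash M$: least relation containing $x\sigma$ ($x\in\mathrm{dom}(\sigma)$) and names outside $\tilde n$, closed under applying symbols other than $\mathsf{priv}$ and under $=_E$. $T[\mathtt{s}/M]$ replaces each occurrence of $\mathtt{s}$ by $M$. Positions are sequences of positive integers, $T|_p$ the subterm at $p$. An encryption occurrence $q$ in $U$ (head of $U|_q$ in $\{\mathsf{enc},\mathsf{enca}\}$) is an agent encryption w.r.t. names $\tilde m$ if $U|_{q\cdot3}\in\tilde m$, and a probabilistic encryption w.r.t. a set of terms $S$ if for all $V\in S$ and $p$ with $V|_p=U|_{q\cdot3}$, $p=q'\cdot3$ with $V|_{q'}=U|_q$. $\varphi$ is well-formed w.r.t. $\mathtt{s}$ if (1) every encryption in $\sigma$ is an agent encryption w.r.t. $\tilde n\setminus\{\mathtt{s}\}$ and a probabilistic encryption w.r.t. $\mathrm{ran}(\sigma)$; (2) for all subterms $\mathsf{enc}(M,K,R)$, $\mathsf{enca}(M',K',R')$, $\mathsf{sign}(U,V)$, $\mathsf{pub}(W)$, $\mathsf{priv}(W')$ of $\varphi$, $\mathtt{s}$ does not occur in $K,K',V,W,W',R,R'$; (3) $\varphi$ contains no destructor. *)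

theory Defs
  imports Main
begin

type_synonym name = nat
type_synonym var = nat

datatype trm =
    Var var | Nm name | Cst string
  | Enc trm trm trm | Dec trm trm | Enca trm trm trm | Deca trm trm
  | Pub trm | Priv trm | Pair trm trm | Pi1 trm | Pi2 trm
  | Sign trm trm | Check trm trm trm | Retrieve trm

definition ok :: trm where "ok = Cst ''ok''"

fun args :: "trm \<Rightarrow> trm list" where
  "args (Enc a b c) = [a,b,c]"
| "args (Dec a b) = [a,b]"
| "args (Enca a b c) = [a,b,c]"
| "args (Deca a b) = [a,b]"
| "args (Pub a) = [a]"
| "args (Priv a) = [a]"
| "args (Pair a b) = [a,b]"
| "args (Pi1 a) = [a]"
| "args (Pi2 a) = [a]"
| "args (Sign a b) = [a,b]"
| "args (Check a b c) = [a,b,c]"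
| "args (Retrieve a) = [a]"
| "args _ = []"

fun set_args :: "trm \<Rightarrow> trm list \<Rightarrow> trm" where
  "set_args (Enc _ _ _) [a,b,c] = Enc a b c"
| "set_args (Dec _ _) [a,b] = Dec a b"
| "set_args (Enca _ _ _) [a,b,c] = Enca a b c"
| "set_args (Deca _ _) [a,b] = Deca a b"
| "set_args (Pub _) [a] = Pub a"
| "set_args (Priv _) [a] = Priv a"
| "set_args (Pair _ _) [a,b] = Pair a b"
| "set_args (Pi1 _) [a] = Pi1 a"
| "set_args (Pi2 _) [a] = Pi2 a"
| "set_args (Sign _ _) [a,b] = Sign a b"
| "set_args (Check _ _ _) [a,b,c] = Check a b c"
| "set_args (Retrieve _) [a] = Retrieve a"
| "set_args t _ = t"

text \<open>Positions are lists of positive integers; \<open>subterm_at T p = Some (T|_p)\<close>.\<close>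
primrec subterm_at :: "trm \<Rightarrow> nat list \<Rightarrow> trm option" where
  "subterm_at t [] = Some t"
| "subterm_at t (i # p) =
     (if 0 < i \<and> i \<le> length (args t) then subterm_at (args t ! (i - 1)) p else None)"

primrec replace_at :: "trm \<Rightarrow> nat list \<Rightarrow> trm \<Rightarrow> trm" where
  "replace_at t [] u = u"
| "replace_at t (i # p) u =
     (if 0 < i \<and> i \<le> length (args t)
      then set_args t ((args t)[i - 1 := replace_at (args t ! (i - 1)) p u])
      else t)"

definition subterms :: "trm \<Rightarrow> trm set" where
  "subterms t = {u. \<exists>p. subterm_at t p = Some u}"

definition vars :: "trm \<Rightarrow> var set" where
  "vars t = {x. Var x \<in> subterms t}"

definition names :: "trm \<Rightarrow> name set" where
  "names t = {n. Nm n \<in> subterms t}"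

definition is_destructor :: "trm \<Rightarrow> bool" where
  "is_destructor t \<longleftrightarrow> (case t of Dec _ _ \<Rightarrow> True | Deca _ _ \<Rightarrow> True | Pi1 _ \<Rightarrow> True
      | Pi2 _ \<Rightarrow> True | Check _ _ _ \<Rightarrow> True | Retrieve _ \<Rightarrow> True | _ \<Rightarrow> False)"

definition is_encryption :: "trm \<Rightarrow> bool" where
  "is_encryption t \<longleftrightarrow> (case t of Enc _ _ _ \<Rightarrow> True | Enca _ _ _ \<Rightarrow> True | _ \<Rightarrow> False)"

definition closed :: "trm \<Rightarrow> bool" where
  "closed t \<longleftrightarrow> vars t = {}"

inductive rroot :: "trm \<Rightarrow> trm \<Rightarrow> bool" where
  "rroot (Pi1 (Pair z1 z2)) z1"
| "rroot (Pi2 (Pair z1 z2)) z2"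
| "rroot (Dec (Enc z1 z2 z3) z2) z1"
| "rroot (Deca (Enca z1 (Pub z2) z3) (Priv z2)) z1"
| "rroot (Check z1 (Sign z1 (Priv z2)) (Pub z2)) ok"
| "rroot (Retrieve (Sign z1 z2)) z1"

definition rstep :: "trm \<Rightarrow> trm \<Rightarrow> bool" where
  "rstep U V \<longleftrightarrow> (\<exists>p l r. subterm_at U p = Some l \<and> rroot l r \<and> V = replace_at U p r)"

definition eqE :: "trm \<Rightarrow> trm \<Rightarrow> bool" where
  "eqE = (sup rstep rstep\<inverse>\<inverse>)\<^sup>*\<^sup>*"

definition normal_form :: "trm \<Rightarrow> bool" where
  "normal_form t \<longleftrightarrow> \<not> (\<exists>u. rstep t u)"

type_synonym subst = "var \<rightharpoonup> trm"

primrec subst1 :: "subst \<Rightarrow> trm \<Rightarrow> trm" where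
  "subst1 \<sigma> (Var x) = (case \<sigma> x of Some u \<Rightarrow> u | None \<Rightarrow> Var x)"
| "subst1 \<sigma> (Nm n) = Nm n"
| "subst1 \<sigma> (Cst c) = Cst c"
| "subst1 \<sigma> (Enc a b c) = Enc (subst1 \<sigma> a) (subst1 \<sigma> b) (subst1 \<sigma> c)"
| "subst1 \<sigma> (Dec a b) = Dec (subst1 \<sigma> a) (subst1 \<sigma> b)"
| "subst1 \<sigma> (Enca a b c) = Enca (subst1 \<sigma> a) (subst1 \<sigma> b) (subst1 \<sigma> c)"
| "subst1 \<sigma> (Deca a b) = Deca (subst1 \<sigma> a) (subst1 \<sigma> b)"
| "subst1 \<sigma> (Pub a) = Pub (subst1 \<sigma> a)"
| "subst1 \<sigma> (Priv a) = Priv (subst1 \<sigma> a)"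
| "subst1 \<sigma> (Pair a b) = Pair (subst1 \<sigma> a) (subst1 \<sigma> b)"
| "subst1 \<sigma> (Pi1 a) = Pi1 (subst1 \<sigma> a)"
| "subst1 \<sigma> (Pi2 a) = Pi2 (subst1 \<sigma> a)"
| "subst1 \<sigma> (Sign a b) = Sign (subst1 \<sigma> a) (subst1 \<sigma> b)"
| "subst1 \<sigma> (Check a b c) = Check (subst1 \<sigma> a) (subst1 \<sigma> b) (subst1 \<sigma> c)"
| "subst1 \<sigma> (Retrieve a) = Retrieve (subst1 \<sigma> a)"

text \<open>Application \<open>T\<sigma>\<close> of an acyclic substitution: iterate the one-step application
  \<open>card (dom \<sigma>)\<close> times, which resolves every chain of an acyclic substitution.\<close>
definition app :: "subst \<Rightarrow> trm \<Rightarrow> trm" where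
  "app \<sigma> t = (subst1 \<sigma> ^^ card (dom \<sigma>)) t"

primrec repl :: "name \<Rightarrow> trm \<Rightarrow> trm \<Rightarrow> trm" where
  "repl s M (Var x) = Var x"
| "repl s M (Nm n) = (if n = s then M else Nm n)"
| "repl s M (Cst c) = Cst c"
| "repl s M (Enc a b c) = Enc (repl s M a) (repl s M b) (repl s M c)"
| "repl s M (Dec a b) = Dec (repl s M a) (repl s M b)"
| "repl s M (Enca a b c) = Enca (repl s M a) (repl s M b) (repl s M c)"
| "repl s M (Deca a b) = Deca (repl s M a) (repl s M b)"
| "repl s M (Pub a) = Pub (repl s M a)"
| "repl s M (Priv a) = Priv (repl s M a)"
| "repl s M (Pair a b) = Pair (repl s M a) (repl s M b)"
| "repl s M (Pi1 a) = Pi1 (repl s M a)"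
| "repl s M (Pi2 a) = Pi2 (repl s M a)"
| "repl s M (Sign a b) = Sign (repl s M a) (repl s M b)"
| "repl s M (Check a b c) = Check (repl s M a) (repl s M b) (repl s M c)"
| "repl s M (Retrieve a) = Retrieve (repl s M a)"

text \<open>A frame \<open>\<nu>\<tilde>n.\<sigma>\<close> is a pair (restricted names, substitution).\<close>
type_synonym frame = "name set \<times> subst"

definition is_frame :: "frame \<Rightarrow> bool" where
  "is_frame \<phi> \<longleftrightarrow> finite (fst \<phi>) \<and> finite (dom (snd \<phi>)) \<and>
     acyclic {(x, y). x \<in> dom (snd \<phi>) \<and> y \<in> vars (the (snd \<phi> x))}"

definition public :: "frame \<Rightarrow> trm \<Rightarrow> bool" where
  "public \<phi> t \<longleftrightarrow> names t \<inter> fst \<phi> = {} \<and> (\<forall>u. Priv u \<notin> subterms t)"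

inductive ded :: "frame \<Rightarrow> trm \<Rightarrow> bool" where
  ded_var: "x \<in> dom (snd \<phi>) \<Longrightarrow> ded \<phi> (app (snd \<phi>) (Var x))"
| ded_name: "n \<notin> fst \<phi> \<Longrightarrow> ded \<phi> (Nm n)"
| ded_cst: "ded \<phi> (Cst c)"
| ded_enc: "ded \<phi> a \<Longrightarrow> ded \<phi> b \<Longrightarrow> ded \<phi> c \<Longrightarrow> ded \<phi> (Enc a b c)"
| ded_dec: "ded \<phi> a \<Longrightarrow> ded \<phi> b \<Longrightarrow> ded \<phi> (Dec a b)"
| ded_enca: "ded \<phi> a \<Longrightarrow> ded \<phi> b \<Longrightarrow> ded \<phi> c \<Longrightarrow> ded \<phi> (Enca a b c)"
| ded_deca: "ded \<phi> a \<Longrightarrow> ded \<phi> b \<Longrightarrow> ded \<phi> (Deca a b)"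
| ded_pub: "ded \<phi> a \<Longrightarrow> ded \<phi> (Pub a)"
| ded_pair: "ded \<phi> a \<Longrightarrow> ded \<phi> b \<Longrightarrow> ded \<phi> (Pair a b)"
| ded_pi1: "ded \<phi> a \<Longrightarrow> ded \<phi> (Pi1 a)"
| ded_pi2: "ded \<phi> a \<Longrightarrow> ded \<phi> (Pi2 a)"
| ded_sign: "ded \<phi> a \<Longrightarrow> ded \<phi> b \<Longrightarrow> ded \<phi> (Sign a b)"
| ded_check: "ded \<phi> a \<Longrightarrow> ded \<phi> b \<Longrightarrow> ded \<phi> c \<Longrightarrow> ded \<phi> (Check a b c)"
| ded_retrieve: "ded \<phi> a \<Longrightarrow> ded \<phi> (Retrieve a)"
| ded_eq: "ded \<phi> a \<Longrightarrow> eqE a b \<Longrightarrow> ded \<phi> b"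

definition enc_occ :: "trm \<Rightarrow> nat list \<Rightarrow> bool" where
  "enc_occ U q \<longleftrightarrow> (\<exists>t. subterm_at U q = Some t \<and> is_encryption t)"

definition agent_enc :: "name set \<Rightarrow> trm \<Rightarrow> nat list \<Rightarrow> bool" where
  "agent_enc m U q \<longleftrightarrow> (\<exists>n \<in> m. subterm_at U (q @ [3]) = Some (Nm n))"

definition prob_enc :: "trm set \<Rightarrow> trm \<Rightarrow> nat list \<Rightarrow> bool" where
  "prob_enc S U q \<longleftrightarrow> (\<forall>V \<in> S. \<forall>p. subterm_at V p = subterm_at U (q @ [3]) \<longrightarrow>
      (\<exists>q'. p = q' @ [3] \<and> subterm_at V q' = subterm_at U q))"

definition frame_subterms :: "frame \<Rightarrow> trm set" where
  "frame_subterms \<phi> = (\<Union>t \<in> ran (snd \<phi>). subterms t)"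

definition well_formed :: "frame \<Rightarrow> name \<Rightarrow> bool" where
  "well_formed \<phi> s \<longleftrightarrow>
     (\<forall>U \<in> ran (snd \<phi>). \<forall>q. enc_occ U q \<longrightarrow>
         agent_enc (fst \<phi> - {s}) U q \<and> prob_enc (ran (snd \<phi>)) U q) \<and>
     (\<forall>t \<in> frame_subterms \<phi>.
         (\<forall>M K R. t = Enc M K R \<longrightarrow> s \<notin> names K \<and> s \<notin> names R) \<and>
         (\<forall>M K R. t = Enca M K R \<longrightarrow> s \<notin> names K \<and> s \<notin> names R) \<and>
         (\<forall>U V. t = Sign U V \<longrightarrow> s \<notin> names V) \<and>
         (\<forall>W. t = Pub W \<longrightarrow> s \<notin> names W) \<and>
         (\<forall>W. t = Priv W \<longrightarrow> s \<notin> names W)) \<and>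
     (\<forall>t \<in> frame_subterms \<phi>. \<not> is_destructor t)"

end

theory Submission
  imports Defs
begin

text \<open>A rewrite step of \<open>U\<sigma>[s/M]\<close> cannot take place inside \<open>M\<close>, which is in normal form, nor
  inside the frame, which is destructor free; so its redex comes from a destructor of the recipe
  \<open>U\<close>. A redex is determined by equalities between subterms, and the key point is that \<open>[s/M]\<close>
  is injective on the relevant terms: the secret itself is not deducible, and every encryption in
  the well-formed frame carries its own agent name as randomness, which no attacker computation
  and no other part of the frame can reproduce. Hence the redex already exists in \<open>U\<sigma>\<close>. Its
  reduct is either given by a recipe or is a subterm of the frame; in the latter case it is bound
  to a fresh frame variable. It was deducible already, so the extended frame deduces the same
  terms, and it is not a randomness, so the extended frame stays well formed.\<close>

primrec subtrms :: "trm \<Rightarrow> trm set" where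
  "subtrms (Var x) = {Var x}"
| "subtrms (Nm n) = {Nm n}"
| "subtrms (Cst c) = {Cst c}"
| "subtrms (Enc a b c) = insert (Enc a b c) (subtrms a \<union> subtrms b \<union> subtrms c)"
| "subtrms (Dec a b) = insert (Dec a b) (subtrms a \<union> subtrms b)"
| "subtrms (Enca a b c) = insert (Enca a b c) (subtrms a \<union> subtrms b \<union> subtrms c)"
| "subtrms (Deca a b) = insert (Deca a b) (subtrms a \<union> subtrms b)"
| "subtrms (Pub a) = insert (Pub a) (subtrms a)"
| "subtrms (Priv a) = insert (Priv a) (subtrms a)"
| "subtrms (Pair a b) = insert (Pair a b) (subtrms a \<union> subtrms b)"
| "subtrms (Pi1 a) = insert (Pi1 a) (subtrms a)"
| "subtrms (Pi2 a) = insert (Pi2 a) (subtrms a)"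
| "subtrms (Sign a b) = insert (Sign a b) (subtrms a \<union> subtrms b)"
| "subtrms (Check a b c) = insert (Check a b c) (subtrms a \<union> subtrms b \<union> subtrms c)"
| "subtrms (Retrieve a) = insert (Retrieve a) (subtrms a)"

lemma subtrms_args_conv: "subtrms t = insert t (\<Union>a\<in>set (args t). subtrms a)"
  by (cases t) auto

lemma subtrms_refl [simp]: "t \<in> subtrms t"
  by (cases t) auto

lemma subtrms_trans: "u \<in> subtrms t \<Longrightarrow> v \<in> subtrms u \<Longrightarrow> v \<in> subtrms t"
  by (induction t) auto

lemma subtrms_arg: "a \<in> set (args t) \<Longrightarrow> subtrms a \<subseteq> subtrms t"
  by (subst (2) subtrms_args_conv) auto

lemma size_arg_less: "a \<in> set (args t) \<Longrightarrow> size a < size t"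
  by (cases t) auto

lemma size_subtrms_le: "u \<in> subtrms t \<Longrightarrow> size u \<le> size t"
  by (induction t) auto

lemma subterm_at_append:
  "subterm_at t (p @ q) = (case subterm_at t p of None \<Rightarrow> None | Some u \<Rightarrow> subterm_at u q)"
  by (induction p arbitrary: t) auto

lemma subterm_at_Cons_SomeE:
  assumes "subterm_at t (i # p) = Some u"
  obtains a where "a \<in> set (args t)" "subterm_at a p = Some u"
proof -
  from assms have "i - 1 < length (args t)" "subterm_at (args t ! (i - 1)) p = Some u"
    by (auto split: if_splits)
  then show thesis by (intro that[of "args t ! (i - 1)"]) auto
qed

lemma subterm_at_in_subtrms: "subterm_at t p = Some u \<Longrightarrow> u \<in> subtrms t"
proof (induction p arbitrary: t)
  case (Cons i p)
  then obtain a where "a \<in> set (args t)" "subterm_at a p = Some u"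
    by (blast elim: subterm_at_Cons_SomeE)
  with Cons.IH subtrms_arg show ?case by blast
qed simp

lemma size_subterm_at_less:
  assumes "subterm_at t p = Some u" "p \<noteq> []"
  shows "size u < size t"
proof -
  obtain i p' where "p = i # p'" using assms(2) by (cases p) auto
  then obtain a where "a \<in> set (args t)" "u \<in> subtrms a"
    using assms(1) by (blast elim: subterm_at_Cons_SomeE dest: subterm_at_in_subtrms)
  then show ?thesis using size_subtrms_le size_arg_less by fastforce
qed

lemma subtrms_in_subterm_at: "u \<in> subtrms t \<Longrightarrow> \<exists>p. subterm_at t p = Some u"
proof (induction t rule: measure_induct_rule[of size])
  case (less t)
  show ?case
  proof (cases "u = t")
    case False
    with less.prems obtain j where j: "j < length (args t)" "u \<in> subtrms (args t ! j)"
      by (subst (asm) subtrms_args_conv) (auto simp: in_set_conv_nth)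
    with less.IH[OF size_arg_less] obtain p where "subterm_at (args t ! j) p = Some u"
      by (meson nth_mem)
    with j have "subterm_at t (Suc j # p) = Some u" by simp
    then show ?thesis by blast
  qed (auto intro: exI[of _ "[]"])
qed

lemma subterms_eq_subtrms: "subterms t = subtrms t"
  unfolding subterms_def using subterm_at_in_subtrms subtrms_in_subterm_at by blast

lemma vars_subtrms: "vars t = {x. Var x \<in> subtrms t}"
  unfolding vars_def subterms_eq_subtrms ..

lemma names_subtrms: "names t = {n. Nm n \<in> subtrms t}"
  unfolding names_def subterms_eq_subtrms ..

lemma vars_simps [simp]:
  "vars (Var x) = {x}" "vars (Nm n) = {}" "vars (Cst c) = {}"
  "vars (Enc a b d) = vars a \<union> vars b \<union> vars d"
  "vars (Dec a b) = vars a \<union> vars b"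
  "vars (Enca a b d) = vars a \<union> vars b \<union> vars d"
  "vars (Deca a b) = vars a \<union> vars b"
  "vars (Pub a) = vars a" "vars (Priv a) = vars a"
  "vars (Pair a b) = vars a \<union> vars b"
  "vars (Pi1 a) = vars a" "vars (Pi2 a) = vars a"
  "vars (Sign a b) = vars a \<union> vars b"
  "vars (Check a b d) = vars a \<union> vars b \<union> vars d"
  "vars (Retrieve a) = vars a"
  by (auto simp: vars_subtrms)

lemma names_simps [simp]:
  "names (Var x) = {}" "names (Nm n) = {n}" "names (Cst c) = {}"
  "names (Enc a b d) = names a \<union> names b \<union> names d"
  "names (Dec a b) = names a \<union> names b"
  "names (Enca a b d) = names a \<union> names b \<union> names d"
  "names (Deca a b) = names a \<union> names b"
  "names (Pub a) = names a" "names (Priv a) = names a"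
  "names (Pair a b) = names a \<union> names b"
  "names (Pi1 a) = names a" "names (Pi2 a) = names a"
  "names (Sign a b) = names a \<union> names b"
  "names (Check a b d) = names a \<union> names b \<union> names d"
  "names (Retrieve a) = names a"
  by (auto simp: names_subtrms)

lemma finite_vars: "finite (vars t)"
  by (induction t) auto

lemma vars_arg: "a \<in> set (args t) \<Longrightarrow> vars a \<subseteq> vars t"
  using subtrms_arg unfolding vars_subtrms by blast

lemma names_arg: "a \<in> set (args t) \<Longrightarrow> names a \<subseteq> names t"
  using subtrms_arg unfolding names_subtrms by blast

lemma args_set_args: "length xs = length (args t) \<Longrightarrow> args (set_args t xs) = xs"
  by (cases t) (auto simp: length_Suc_conv)

lemma set_args_set_args:
  "length ys = length (args t) \<Longrightarrow> length xs = length (args t) \<Longrightarrow>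
   set_args (set_args t ys) xs = set_args t xs"
  by (cases t) (auto simp: length_Suc_conv)

lemma set_args_args [simp]: "set_args t (args t) = t"
  by (cases t) auto

lemma is_encryption_set_args:
  "length xs = length (args t) \<Longrightarrow> is_encryption (set_args t xs) = is_encryption t"
  by (cases t) (auto simp: length_Suc_conv is_encryption_def)

lemma is_destructor_simps [simp]:
  "\<not> is_destructor (Var x)" "\<not> is_destructor (Nm m)" "\<not> is_destructor (Cst c)"
  "\<not> is_destructor (Enc a b d)" "is_destructor (Dec a b)" "\<not> is_destructor (Enca a b d)"
  "is_destructor (Deca a b)" "\<not> is_destructor (Pub a)" "\<not> is_destructor (Priv a)"
  "\<not> is_destructor (Pair a b)" "is_destructor (Pi1 a)" "is_destructor (Pi2 a)"
  "\<not> is_destructor (Sign a b)" "is_destructor (Check a b d)" "is_destructor (Retrieve a)"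
  by (simp_all add: is_destructor_def)

lemma is_encryption_iff: "is_encryption t \<longleftrightarrow> (\<exists>a b c. t = Enc a b c \<or> t = Enca a b c)"
  by (cases t) (auto simp: is_encryption_def)

lemma is_encryption_subterm_at_3:
  "is_encryption w \<Longrightarrow> length (args w) = 3 \<and> subterm_at w [3] = Some (args w ! 2)"
  by (auto simp: is_encryption_iff)

lemma rroot_is_destructor: "rroot l r \<Longrightarrow> is_destructor l"
  by (induction rule: rroot.induct) auto

lemma rstep_iff:
  "rstep t V \<longleftrightarrow> rroot t V \<or>
     (\<exists>i<length (args t). \<exists>a'. rstep (args t ! i) a' \<and> V = set_args t ((args t)[i := a']))"
proof
  assume "rstep t V"
  then obtain p l r where h: "subterm_at t p = Some l" "rroot l r" "V = replace_at t p r"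
    unfolding rstep_def by blast
  show "rroot t V \<or> (\<exists>i<length (args t). \<exists>a'. rstep (args t ! i) a' \<and> V = set_args t ((args t)[i := a']))"
  proof (cases p)
    case (Cons j p')
    with h have j: "0 < j" "j \<le> length (args t)" "subterm_at (args t ! (j - 1)) p' = Some l"
      by (auto split: if_splits)
    then have "rstep (args t ! (j - 1)) (replace_at (args t ! (j - 1)) p' r)"
      unfolding rstep_def using h by blast
    then show ?thesis using h Cons j by (intro disjI2 exI[of _ "j - 1"]) auto
  qed (use h in simp)
next
  assume "rroot t V \<or> (\<exists>i<length (args t). \<exists>a'. rstep (args t ! i) a' \<and> V = set_args t ((args t)[i := a']))"
  then show "rstep t V"
  proof
    assume "rroot t V"
    then show ?thesis unfolding rstep_def by (intro exI[of _ "[]"]) auto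
  next
    assume "\<exists>i<length (args t). \<exists>a'. rstep (args t ! i) a' \<and> V = set_args t ((args t)[i := a'])"
    then obtain i p l r where "i < length (args t)" "subterm_at (args t ! i) p = Some l" "rroot l r"
        "V = set_args t ((args t)[i := replace_at (args t ! i) p r])"
      unfolding rstep_def by blast
    then show ?thesis unfolding rstep_def by (intro exI[of _ "Suc i # p"] exI[of _ l] exI[of _ r]) auto
  qed
qed

lemma rroot_rstep: "rroot l r \<Longrightarrow> rstep l r"
  using rstep_iff by blast

lemma rstep_arg:
  "i < length (args t) \<Longrightarrow> rstep (args t ! i) a \<Longrightarrow> rstep t (set_args t ((args t)[i := a]))"
  using rstep_iff by blast

lemma rroot_eqE: "rroot l r \<Longrightarrow> eqE l r"
  unfolding eqE_def using rroot_rstep by blast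

definition destructor_free :: "trm \<Rightarrow> bool" where
  "destructor_free t \<longleftrightarrow> (\<forall>u\<in>subtrms t. \<not> is_destructor u)"

lemma destructor_free_simps [simp]:
  "destructor_free (Var x)" "destructor_free (Nm m)" "destructor_free (Cst c)"
  "destructor_free (Enc a b d) \<longleftrightarrow> destructor_free a \<and> destructor_free b \<and> destructor_free d"
  "\<not> destructor_free (Dec a b)"
  "destructor_free (Enca a b d) \<longleftrightarrow> destructor_free a \<and> destructor_free b \<and> destructor_free d"
  "\<not> destructor_free (Deca a b)"
  "destructor_free (Pub a) \<longleftrightarrow> destructor_free a" "destructor_free (Priv a) \<longleftrightarrow> destructor_free a"
  "destructor_free (Pair a b) \<longleftrightarrow> destructor_free a \<and> destructor_free b"
  "\<not> destructor_free (Pi1 a)" "\<not> destructor_free (Pi2 a)"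
  "destructor_free (Sign a b) \<longleftrightarrow> destructor_free a \<and> destructor_free b"
  "\<not> destructor_free (Check a b d)" "\<not> destructor_free (Retrieve a)"
  unfolding destructor_free_def by auto

section \<open>Replacing the secret\<close>

lemma repl_ok [simp]: "repl s M ok = ok"
  by (simp add: ok_def)

lemma repl_args: "args t \<noteq> [] \<Longrightarrow> repl s M t = set_args t (map (repl s M) (args t))"
  by (cases t) auto

lemma args_repl: "t \<noteq> Nm s \<Longrightarrow> args (repl s M t) = map (repl s M) (args t)"
  by (cases t) auto

lemma is_destructor_repl: "t \<noteq> Nm s \<Longrightarrow> is_destructor (repl s M t) = is_destructor t"
  by (cases t) auto

lemma repl_eq_NmD: "t \<noteq> Nm s \<Longrightarrow> repl s M t = Nm r \<Longrightarrow> t = Nm r"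
  by (cases t) (auto split: if_splits)

lemma repl_eq_same_head:
  assumes "t1 \<noteq> Nm s" "t2 \<noteq> Nm s" "repl s M t1 = repl s M t2"
  shows "length (args t1) = length (args t2) \<and> set_args t1 (args t2) = t2 \<and>
         map (repl s M) (args t1) = map (repl s M) (args t2)"
  using assms by (cases t1; cases t2) auto

lemma repl_eq_constructorD:
  "t \<noteq> Nm s \<Longrightarrow> repl s M t = Pair x y \<Longrightarrow> \<exists>a b. t = Pair a b \<and> repl s M a = x \<and> repl s M b = y"
  "t \<noteq> Nm s \<Longrightarrow> repl s M t = Enc x y z \<Longrightarrow>
     \<exists>a b c. t = Enc a b c \<and> repl s M a = x \<and> repl s M b = y \<and> repl s M c = z"
  "t \<noteq> Nm s \<Longrightarrow> repl s M t = Enca x y z \<Longrightarrow>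
     \<exists>a b c. t = Enca a b c \<and> repl s M a = x \<and> repl s M b = y \<and> repl s M c = z"
  "t \<noteq> Nm s \<Longrightarrow> repl s M t = Pub x \<Longrightarrow> \<exists>a. t = Pub a \<and> repl s M a = x"
  "t \<noteq> Nm s \<Longrightarrow> repl s M t = Priv x \<Longrightarrow> \<exists>a. t = Priv a \<and> repl s M a = x"
  "t \<noteq> Nm s \<Longrightarrow> repl s M t = Sign x y \<Longrightarrow> \<exists>a b. t = Sign a b \<and> repl s M a = x \<and> repl s M b = y"
  "t \<noteq> Nm s \<Longrightarrow> repl s M t = Pi1 x \<Longrightarrow> \<exists>a. t = Pi1 a \<and> repl s M a = x"
  "t \<noteq> Nm s \<Longrightarrow> repl s M t = Pi2 x \<Longrightarrow> \<exists>a. t = Pi2 a \<and> repl s M a = x"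
  "t \<noteq> Nm s \<Longrightarrow> repl s M t = Retrieve x \<Longrightarrow> \<exists>a. t = Retrieve a \<and> repl s M a = x"
  "t \<noteq> Nm s \<Longrightarrow> repl s M t = Dec x y \<Longrightarrow> \<exists>a b. t = Dec a b \<and> repl s M a = x \<and> repl s M b = y"
  "t \<noteq> Nm s \<Longrightarrow> repl s M t = Deca x y \<Longrightarrow> \<exists>a b. t = Deca a b \<and> repl s M a = x \<and> repl s M b = y"
  "t \<noteq> Nm s \<Longrightarrow> repl s M t = Check x y z \<Longrightarrow>
     \<exists>a b c. t = Check a b c \<and> repl s M a = x \<and> repl s M b = y \<and> repl s M c = z"
  by (cases t; auto split: if_splits)+

lemma destructor_free_repl_irreducible:
  assumes "destructor_free t" "normal_form M"
  shows "\<not> rstep (repl s M t) V"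
  using assms(1)
proof (induction t arbitrary: V rule: measure_induct_rule[of size])
  case (less t)
  show ?case
  proof (cases "t = Nm s")
    case True
    then show ?thesis using assms(2) unfolding normal_form_def by simp
  next
    case False
    have "\<not> rroot (repl s M t) V"
      using less.prems rroot_is_destructor is_destructor_repl[OF False]
      unfolding destructor_free_def by fastforce
    moreover have "\<not> rstep (repl s M a) a'" if "a \<in> set (args t)" for a a'
    proof -
      have "destructor_free a" using less.prems subtrms_arg[OF that]
        unfolding destructor_free_def by blast
      then show ?thesis using less.IH size_arg_less[OF that] by blast
    qed
    ultimately show ?thesis using args_repl[OF False] rstep_iff by (metis length_map nth_map nth_mem)
  qed
qed

section \<open>Applying an acyclic substitution\<close>

lemma funpow_subst1_simps:
  "(subst1 \<sigma> ^^ j) (Nm n) = Nm n" "(subst1 \<sigma> ^^ j) (Cst c) = Cst c"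
  "(subst1 \<sigma> ^^ j) (Enc a b d) = Enc ((subst1 \<sigma> ^^ j) a) ((subst1 \<sigma> ^^ j) b) ((subst1 \<sigma> ^^ j) d)"
  "(subst1 \<sigma> ^^ j) (Dec a b) = Dec ((subst1 \<sigma> ^^ j) a) ((subst1 \<sigma> ^^ j) b)"
  "(subst1 \<sigma> ^^ j) (Enca a b d) = Enca ((subst1 \<sigma> ^^ j) a) ((subst1 \<sigma> ^^ j) b) ((subst1 \<sigma> ^^ j) d)"
  "(subst1 \<sigma> ^^ j) (Deca a b) = Deca ((subst1 \<sigma> ^^ j) a) ((subst1 \<sigma> ^^ j) b)"
  "(subst1 \<sigma> ^^ j) (Pub a) = Pub ((subst1 \<sigma> ^^ j) a)"
  "(subst1 \<sigma> ^^ j) (Priv a) = Priv ((subst1 \<sigma> ^^ j) a)"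
  "(subst1 \<sigma> ^^ j) (Pair a b) = Pair ((subst1 \<sigma> ^^ j) a) ((subst1 \<sigma> ^^ j) b)"
  "(subst1 \<sigma> ^^ j) (Pi1 a) = Pi1 ((subst1 \<sigma> ^^ j) a)"
  "(subst1 \<sigma> ^^ j) (Pi2 a) = Pi2 ((subst1 \<sigma> ^^ j) a)"
  "(subst1 \<sigma> ^^ j) (Sign a b) = Sign ((subst1 \<sigma> ^^ j) a) ((subst1 \<sigma> ^^ j) b)"
  "(subst1 \<sigma> ^^ j) (Check a b d) = Check ((subst1 \<sigma> ^^ j) a) ((subst1 \<sigma> ^^ j) b) ((subst1 \<sigma> ^^ j) d)"
  "(subst1 \<sigma> ^^ j) (Retrieve a) = Retrieve ((subst1 \<sigma> ^^ j) a)"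
  by (induction j) auto

lemma app_simps [simp]:
  "app \<sigma> (Nm n) = Nm n" "app \<sigma> (Cst c) = Cst c"
  "app \<sigma> (Enc a b d) = Enc (app \<sigma> a) (app \<sigma> b) (app \<sigma> d)"
  "app \<sigma> (Dec a b) = Dec (app \<sigma> a) (app \<sigma> b)"
  "app \<sigma> (Enca a b d) = Enca (app \<sigma> a) (app \<sigma> b) (app \<sigma> d)"
  "app \<sigma> (Deca a b) = Deca (app \<sigma> a) (app \<sigma> b)"
  "app \<sigma> (Pub a) = Pub (app \<sigma> a)"
  "app \<sigma> (Priv a) = Priv (app \<sigma> a)"
  "app \<sigma> (Pair a b) = Pair (app \<sigma> a) (app \<sigma> b)"
  "app \<sigma> (Pi1 a) = Pi1 (app \<sigma> a)"
  "app \<sigma> (Pi2 a) = Pi2 (app \<sigma> a)"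
  "app \<sigma> (Sign a b) = Sign (app \<sigma> a) (app \<sigma> b)"
  "app \<sigma> (Check a b d) = Check (app \<sigma> a) (app \<sigma> b) (app \<sigma> d)"
  "app \<sigma> (Retrieve a) = Retrieve (app \<sigma> a)"
  unfolding app_def by (simp_all add: funpow_subst1_simps)

lemma Var_in_Var_image [simp]: "Var x \<in> Var ` A \<longleftrightarrow> x \<in> A"
  by auto

lemma app_Var_notin_dom: "x \<notin> dom \<sigma> \<Longrightarrow> app \<sigma> (Var x) = Var x"
proof -
  assume "x \<notin> dom \<sigma>"
  then have "(subst1 \<sigma> ^^ j) (Var x) = Var x" for j by (induction j) (auto split: option.splits)
  then show ?thesis unfolding app_def by simp
qed

lemma app_args: "args t \<noteq> [] \<Longrightarrow> app \<sigma> t = set_args t (map (app \<sigma>) (args t))"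
  by (cases t) auto

lemma args_app: "t \<notin> Var ` dom \<sigma> \<Longrightarrow> args (app \<sigma> t) = map (app \<sigma>) (args t)"
  by (cases t) (auto simp: app_Var_notin_dom)

lemma is_encryption_app: "t \<notin> Var ` dom \<sigma> \<Longrightarrow> is_encryption (app \<sigma> t) = is_encryption t"
  by (cases t) (auto simp: app_Var_notin_dom is_encryption_def)

lemma app_eq_NmD: "t \<notin> Var ` dom \<sigma> \<Longrightarrow> app \<sigma> t = Nm r \<Longrightarrow> t = Nm r"
  by (cases t) (auto simp: app_Var_notin_dom)

lemma vars_subst1: "vars (subst1 \<sigma> t) = (\<Union>x\<in>vars t. case \<sigma> x of None \<Rightarrow> {x} | Some v \<Rightarrow> vars v)"
  by (induction t) (auto split: option.splits)

lemma subst1_cong: "(\<And>x. x \<in> vars t \<Longrightarrow> \<sigma> x = \<tau> x) \<Longrightarrow> subst1 \<sigma> t = subst1 \<tau> t"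
  by (induction t) auto

lemma subst1_id: "vars t \<inter> dom \<sigma> = {} \<Longrightarrow> subst1 \<sigma> t = t"
  by (induction t) (auto split: option.splits)

definition dep_rel :: "subst \<Rightarrow> (var \<times> var) set" where
  "dep_rel \<sigma> = {(x, y). x \<in> dom \<sigma> \<and> y \<in> vars (the (\<sigma> x))}"

definition acyclic_subst :: "subst \<Rightarrow> bool" where
  "acyclic_subst \<sigma> \<longleftrightarrow> finite (dom \<sigma>) \<and> acyclic (dep_rel \<sigma>)"

lemma is_frame_iff: "is_frame (n, \<sigma>) \<longleftrightarrow> finite n \<and> acyclic_subst \<sigma>"
  unfolding is_frame_def acyclic_subst_def dep_rel_def by auto

lemma vars_funpow_subst1_in_dom:
  "y \<in> vars ((subst1 \<sigma> ^^ j) t) \<Longrightarrow> y \<in> dom \<sigma> \<Longrightarrow> \<exists>x\<in>vars t. (x, y) \<in> dep_rel \<sigma> ^^ j"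
proof (induction j arbitrary: y)
  case (Suc j)
  from Suc.prems obtain x v where x: "x \<in> vars ((subst1 \<sigma> ^^ j) t)" "\<sigma> x = Some v" "y \<in> vars v"
    by (auto simp: vars_subst1 split: option.splits)
  then have "(x, y) \<in> dep_rel \<sigma>" "x \<in> dom \<sigma>" unfolding dep_rel_def by auto
  with Suc.IH x(1) show ?case by (meson relpow_Suc_I)
qed auto

text \<open>A path of \<open>card D\<close> steps ending in \<open>D\<close> visits \<open>card D + 1\<close> nodes of \<open>D\<close>, so it repeats one.\<close>

lemma acyclic_relpow_card:
  assumes "acyclic R" "finite D" "Domain R \<subseteq> D" "y \<in> D"
  shows "(x, y) \<notin> R ^^ card D"
proof
  let ?k = "card D"
  assume "(x, y) \<in> R ^^ ?k"
  then obtain g where g: "g ?k = y" "\<forall>i<?k. (g i, g (Suc i)) \<in> R"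
    unfolding relpow_fun_conv by blast
  have "g ` {0..?k} \<subseteq> D"
  proof
    fix z assume "z \<in> g ` {0..?k}"
    then obtain i where "i \<le> ?k" "z = g i" by auto
    then show "z \<in> D" using g assms(3,4) by (cases "i < ?k") (auto intro: DomainI)
  qed
  then have "\<not> inj_on g {0..?k}"
    using card_inj_on_le[OF _ _ assms(2)] by fastforce
  then obtain i j where ij: "i < j" "j \<le> ?k" "g i = g j"
    unfolding inj_on_def by (metis atLeastAtMost_iff linorder_neqE_nat)
  have "(g i, g (i + Suc d)) \<in> R\<^sup>+" if "i + Suc d \<le> ?k" for d
    using that
  proof (induction d)
    case (Suc d)
    then show ?case using g(2) by (auto intro: trancl_into_trancl)
  qed (use g(2) in auto)
  from this[of "j - i - 1"] ij have "(g i, g i) \<in> R\<^sup>+" by simp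
  then show False using assms(1) unfolding acyclic_def by blast
qed

lemma vars_app_disjoint_dom:
  assumes "acyclic_subst \<sigma>"
  shows "vars (app \<sigma> t) \<inter> dom \<sigma> = {}"
proof (rule ccontr)
  assume "vars (app \<sigma> t) \<inter> dom \<sigma> \<noteq> {}"
  then obtain y where y: "y \<in> vars ((subst1 \<sigma> ^^ card (dom \<sigma>)) t)" "y \<in> dom \<sigma>"
    unfolding app_def by auto
  then obtain x where "(x, y) \<in> dep_rel \<sigma> ^^ card (dom \<sigma>)"
    using vars_funpow_subst1_in_dom by blast
  moreover have "Domain (dep_rel \<sigma>) \<subseteq> dom \<sigma>" unfolding dep_rel_def by auto
  ultimately show False
    using acyclic_relpow_card[of "dep_rel \<sigma>" "dom \<sigma>" y x] assms y(2)
    unfolding acyclic_subst_def by blast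
qed

lemma funpow_subst1_app: "acyclic_subst \<sigma> \<Longrightarrow> (subst1 \<sigma> ^^ j) (app \<sigma> t) = app \<sigma> t"
  by (induction j) (simp_all add: subst1_id vars_app_disjoint_dom)

lemma app_funpow_subst1:
  assumes "acyclic_subst \<sigma>"
  shows "app \<sigma> ((subst1 \<sigma> ^^ j) t) = app \<sigma> t"
proof -
  have "app \<sigma> ((subst1 \<sigma> ^^ j) t) = (subst1 \<sigma> ^^ (card (dom \<sigma>) + j)) t"
    unfolding app_def funpow_add by simp
  also have "\<dots> = (subst1 \<sigma> ^^ j) (app \<sigma> t)"
    unfolding app_def add.commute[of "card (dom \<sigma>)"] funpow_add by simp
  also have "\<dots> = app \<sigma> t" using funpow_subst1_app[OF assms] .
  finally show ?thesis .
qed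

lemma app_Var_Some: "acyclic_subst \<sigma> \<Longrightarrow> \<sigma> x = Some v \<Longrightarrow> app \<sigma> (Var x) = app \<sigma> v"
  using app_funpow_subst1[of \<sigma> 1 "Var x"] by simp

lemma finite_dep_rel: "finite (dom \<sigma>) \<Longrightarrow> finite (dep_rel \<sigma>)"
proof -
  assume "finite (dom \<sigma>)"
  then have "finite (dom \<sigma> \<times> (\<Union>v\<in>ran \<sigma>. vars v))" by (simp add: finite_ran finite_vars)
  moreover have "dep_rel \<sigma> \<subseteq> dom \<sigma> \<times> (\<Union>v\<in>ran \<sigma>. vars v)"
    unfolding dep_rel_def ran_def by force
  ultimately show ?thesis by (rule finite_subset[rotated])
qed

text \<open>Chains of variables \<open>x \<mapsto> Var y \<mapsto> \<dots>\<close> end, as the finite acyclic \<open>dep_rel \<sigma>\<close> is well founded.\<close>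

lemma app_Var_in_domE:
  assumes "acyclic_subst \<sigma>" "x \<in> dom \<sigma>"
  obtains y v where "\<sigma> y = Some v" "v \<notin> Var ` dom \<sigma>" "app \<sigma> (Var x) = app \<sigma> v"
proof -
  have "wf ((dep_rel \<sigma>)\<inverse>)"
    using assms(1) finite_dep_rel finite_acyclic_wf_converse unfolding acyclic_subst_def by blast
  then have "x \<in> dom \<sigma> \<Longrightarrow> \<exists>y v. \<sigma> y = Some v \<and> v \<notin> Var ` dom \<sigma> \<and> app \<sigma> (Var x) = app \<sigma> v"
  proof (induction x rule: wf_induct_rule)
    case (less x)
    then obtain v where v: "\<sigma> x = Some v" by auto
    show ?case
    proof (cases "v \<in> Var ` dom \<sigma>")
      case True
      then obtain x' where x': "v = Var x'" "x' \<in> dom \<sigma>" by auto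
      then have "(x', x) \<in> (dep_rel \<sigma>)\<inverse>" using v unfolding dep_rel_def by auto
      with less.IH x' v app_Var_Some[OF assms(1) v] show ?thesis by auto
    qed (use v app_Var_Some[OF assms(1) v] in auto)
  qed
  then show ?thesis using assms(2) that by blast
qed

lemma public_iff: "public \<phi> t \<longleftrightarrow> names t \<inter> fst \<phi> = {} \<and> (\<forall>u. Priv u \<notin> subtrms t)"
  unfolding public_def subterms_eq_subtrms ..

lemma public_simps [simp]:
  "public \<phi> (Var x)" "public \<phi> (Nm m) \<longleftrightarrow> m \<notin> fst \<phi>" "public \<phi> (Cst c)"
  "public \<phi> (Enc a b d) \<longleftrightarrow> public \<phi> a \<and> public \<phi> b \<and> public \<phi> d"
  "public \<phi> (Dec a b) \<longleftrightarrow> public \<phi> a \<and> public \<phi> b"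
  "public \<phi> (Enca a b d) \<longleftrightarrow> public \<phi> a \<and> public \<phi> b \<and> public \<phi> d"
  "public \<phi> (Deca a b) \<longleftrightarrow> public \<phi> a \<and> public \<phi> b"
  "public \<phi> (Pub a) \<longleftrightarrow> public \<phi> a" "\<not> public \<phi> (Priv a)"
  "public \<phi> (Pair a b) \<longleftrightarrow> public \<phi> a \<and> public \<phi> b"
  "public \<phi> (Pi1 a) \<longleftrightarrow> public \<phi> a" "public \<phi> (Pi2 a) \<longleftrightarrow> public \<phi> a"
  "public \<phi> (Sign a b) \<longleftrightarrow> public \<phi> a \<and> public \<phi> b"
  "public \<phi> (Check a b d) \<longleftrightarrow> public \<phi> a \<and> public \<phi> b \<and> public \<phi> d"
  "public \<phi> (Retrieve a) \<longleftrightarrow> public \<phi> a"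
  by (auto simp: public_iff)

lemma public_arg: "public \<phi> t \<Longrightarrow> a \<in> set (args t) \<Longrightarrow> public \<phi> a"
  using subtrms_arg names_arg unfolding public_iff by blast

lemma public_set_args:
  "public \<phi> t \<Longrightarrow> length ys = length (args t) \<Longrightarrow> \<forall>y\<in>set ys. public \<phi> y \<Longrightarrow>
   public \<phi> (set_args t ys)"
  by (cases t) (auto simp: length_Suc_conv)

text \<open>Recipes model the attacker's computations on the frame.\<close>

definition recipe :: "frame \<Rightarrow> trm \<Rightarrow> bool" where
  "recipe \<phi> w \<longleftrightarrow> public \<phi> w \<and> vars w \<subseteq> dom (snd \<phi>)"

lemma recipe_arg: "recipe \<phi> t \<Longrightarrow> a \<in> set (args t) \<Longrightarrow> recipe \<phi> a"
  unfolding recipe_def using public_arg vars_arg by blast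

lemma ded_app_recipe: "recipe (n, \<sigma>) w \<Longrightarrow> ded (n, \<sigma>) (app \<sigma> w)"
  unfolding recipe_def
proof (induction w)
  case (Var x)
  then show ?case using ded_var[of x "(n, \<sigma>)"] by simp
qed (auto intro: ded_name ded_cst ded_enc ded_dec ded_enca ded_deca ded_pub ded_pair ded_pi1
    ded_pi2 ded_sign ded_check ded_retrieve)

lemma ded_Pair_fst: "ded \<phi> (Pair a b) \<Longrightarrow> ded \<phi> a"
  using ded_eq[OF ded_pi1 rroot_eqE[OF rroot.intros(1)]] by blast

lemma ded_Pair_snd: "ded \<phi> (Pair a b) \<Longrightarrow> ded \<phi> b"
  using ded_eq[OF ded_pi2 rroot_eqE[OF rroot.intros(2)]] by blast

lemma ded_Sign_msg: "ded \<phi> (Sign a b) \<Longrightarrow> ded \<phi> a"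
  using ded_eq[OF ded_retrieve rroot_eqE[OF rroot.intros(6)]] by blast

lemma frame_subterms_eq: "frame_subterms \<phi> = (\<Union>v\<in>ran (snd \<phi>). subtrms v)"
  unfolding frame_subterms_def subterms_eq_subtrms ..

lemma frame_subterms_iff:
  "w \<in> frame_subterms \<phi> \<longleftrightarrow> (\<exists>v\<in>ran (snd \<phi>). \<exists>q. subterm_at v q = Some w)"
  unfolding frame_subterms_def subterms_def by auto

lemma frame_subterms_subtrms:
  "w \<in> frame_subterms \<phi> \<Longrightarrow> subtrms w \<subseteq> frame_subterms \<phi>"
  unfolding frame_subterms_eq by (blast intro: subtrms_trans)

lemma frame_subterms_arg: "w \<in> frame_subterms \<phi> \<Longrightarrow> a \<in> set (args w) \<Longrightarrow> a \<in> frame_subterms \<phi>"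
  using frame_subterms_subtrms subtrms_arg subtrms_refl by blast

lemma ran_subset_frame_subterms: "ran (snd \<phi>) \<subseteq> frame_subterms \<phi>"
  unfolding frame_subterms_eq by auto

section \<open>Extending a frame by a fresh variable\<close>

lemma acyclic_subst_fun_upd:
  assumes "acyclic_subst \<sigma>" "z \<notin> dom \<sigma>" "\<forall>v\<in>ran \<sigma>. z \<notin> vars v" "z \<notin> vars w"
  shows "acyclic_subst (\<sigma>(z \<mapsto> w))"
proof -
  have dep: "(dep_rel (\<sigma>(z \<mapsto> w)))\<inverse> = (dep_rel \<sigma>)\<inverse> \<union> vars w \<times> {z}"
    using assms(2) unfolding dep_rel_def by (force split: if_splits)
  have "wf ((dep_rel \<sigma>)\<inverse>)"
    using assms(1) finite_dep_rel finite_acyclic_wf_converse unfolding acyclic_subst_def by blast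
  moreover have "wf (vars w \<times> {z})"
    using assms(4) by (auto intro: wf_subset[OF wf_measure[of "\<lambda>x. if x = z then 1 else 0"]])
  moreover have "z \<notin> Range (dep_rel \<sigma>)"
    using assms(3) unfolding dep_rel_def ran_def by auto
  ultimately have "wf ((dep_rel (\<sigma>(z \<mapsto> w)))\<inverse>)"
    unfolding dep by (intro wf_Un) auto
  then show ?thesis
    using assms(1,2) wf_acyclic unfolding acyclic_subst_def by fastforce
qed

context
  fixes \<sigma> :: subst and z :: var and w :: trm
  assumes fresh_dom: "z \<notin> dom \<sigma>" and fresh_ran: "\<forall>v\<in>ran \<sigma>. z \<notin> vars v"
    and fresh_w: "z \<notin> vars w"
begin

lemma funpow_subst1_fun_upd_fresh:
  "z \<notin> vars t \<Longrightarrow> (subst1 (\<sigma>(z \<mapsto> w)) ^^ j) t = (subst1 \<sigma> ^^ j) t"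
proof (induction j arbitrary: t)
  case (Suc j)
  have "subst1 (\<sigma>(z \<mapsto> w)) t = subst1 \<sigma> t"
    using Suc.prems by (intro subst1_cong) auto
  moreover have "z \<notin> vars (subst1 \<sigma> t)"
    using Suc.prems fresh_ran by (auto simp: vars_subst1 split: option.splits intro: ranI)
  ultimately show ?case
    using Suc.IH by (simp only: funpow_Suc_right comp_apply)
qed simp

lemma card_dom_fun_upd_fresh: "finite (dom \<sigma>) \<Longrightarrow> card (dom (\<sigma>(z \<mapsto> w))) = Suc (card (dom \<sigma>))"
  using fresh_dom by simp

lemma app_fun_upd_fresh:
  assumes "acyclic_subst \<sigma>" "z \<notin> vars t"
  shows "app (\<sigma>(z \<mapsto> w)) t = app \<sigma> t"
proof -
  have "app (\<sigma>(z \<mapsto> w)) t = (subst1 (\<sigma>(z \<mapsto> w)) ^^ Suc (card (dom \<sigma>))) t"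
    using assms(1) card_dom_fun_upd_fresh unfolding app_def acyclic_subst_def by simp
  also have "\<dots> = (subst1 \<sigma> ^^ Suc (card (dom \<sigma>))) t"
    using funpow_subst1_fun_upd_fresh[OF assms(2)] .
  also have "\<dots> = subst1 \<sigma> (app \<sigma> t)"
    unfolding app_def by simp
  also have "\<dots> = app \<sigma> t"
    using subst1_id vars_app_disjoint_dom[OF assms(1)] by blast
  finally show ?thesis .
qed

lemma app_fun_upd_fresh_Var:
  assumes "acyclic_subst \<sigma>"
  shows "app (\<sigma>(z \<mapsto> w)) (Var z) = app \<sigma> w"
proof -
  have "app (\<sigma>(z \<mapsto> w)) (Var z) = (subst1 (\<sigma>(z \<mapsto> w)) ^^ card (dom \<sigma>)) w"
    using assms card_dom_fun_upd_fresh unfolding app_def acyclic_subst_def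
    by (simp add: funpow_Suc_right del: funpow.simps)
  then show ?thesis
    using funpow_subst1_fun_upd_fresh[OF fresh_w] unfolding app_def by simp
qed

end

lemma frame_subterms_fun_upd:
  assumes "w \<in> frame_subterms (n, \<sigma>)" "z \<notin> dom \<sigma>"
  shows "frame_subterms (n, \<sigma>(z \<mapsto> w)) = frame_subterms (n, \<sigma>)"
proof -
  have "ran (\<sigma>(z \<mapsto> w)) = insert w (ran \<sigma>)"
    using assms(2) by (simp add: domIff)
  moreover have "subtrms w \<subseteq> frame_subterms (n, \<sigma>)"
    using frame_subterms_subtrms[OF assms(1)] .
  ultimately show ?thesis
    unfolding frame_subterms_eq by auto
qed

lemma subterm_at_shift: "subterm_at v q0 = Some w \<Longrightarrow> subterm_at v (q0 @ q) = subterm_at w q"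
  by (simp add: subterm_at_append)

lemma enc_occ_shift: "subterm_at v q0 = Some w \<Longrightarrow> enc_occ v (q0 @ q) \<longleftrightarrow> enc_occ w q"
  unfolding enc_occ_def by (simp add: subterm_at_shift)

lemma agent_enc_shift: "subterm_at v q0 = Some w \<Longrightarrow> agent_enc m v (q0 @ q) \<longleftrightarrow> agent_enc m w q"
  unfolding agent_enc_def using subterm_at_shift[of v q0 w "q @ [3]"] by simp

lemma prob_enc_shift: "subterm_at v q0 = Some w \<Longrightarrow> prob_enc S v (q0 @ q) \<longleftrightarrow> prob_enc S w q"
  unfolding prob_enc_def using subterm_at_shift[of v q0 w "q @ [3]"] subterm_at_shift[of v q0 w q]
  by simp

lemma prob_enc_insert_subterm:
  assumes U: "prob_enc S U q" and v: "v \<in> S" "subterm_at v q0 = Some w"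
    and not_rand: "subterm_at U (q @ [3]) \<noteq> Some w"
  shows "prob_enc (insert w S) U q"
  unfolding prob_enc_def
proof (intro ballI allI impI)
  fix V p
  assume V: "V \<in> insert w S" and eq: "subterm_at V p = subterm_at U (q @ [3])"
  show "\<exists>q'. p = q' @ [3] \<and> subterm_at V q' = subterm_at U q"
  proof (cases "V \<in> S")
    case True
    with U eq show ?thesis unfolding prob_enc_def by blast
  next
    case False
    then have Vw: "V = w" using V by simp
    then have "p \<noteq> []" using eq not_rand by auto
    then obtain p' x where p: "p = p' @ [x]" by (cases p rule: rev_exhaust) auto
    have "subterm_at v (q0 @ p) = subterm_at U (q @ [3])"
      using eq Vw subterm_at_shift[OF v(2)] by simp
    then obtain q'' where "q0 @ p = q'' @ [3]" "subterm_at v q'' = subterm_at U q"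
      using U v(1) unfolding prob_enc_def by blast
    then show ?thesis using p Vw subterm_at_shift[OF v(2)] by auto
  qed
qed

section \<open>Well-formed frames with an undeducible secret\<close>

locale secret_frame =
  fixes n :: "name set" and \<sigma> :: subst and s :: name
  assumes frame: "is_frame (n, \<sigma>)" and s_restricted: "s \<in> n"
    and wf_frame: "well_formed (n, \<sigma>) s" and s_not_ded: "\<not> ded (n, \<sigma>) (Nm s)"
begin

abbreviation FS :: "trm set" where
  "FS \<equiv> frame_subterms (n, \<sigma>)"

lemma acyclic: "acyclic_subst \<sigma>"
  using frame is_frame_iff by blast

lemma wf_enc:
  "U \<in> ran \<sigma> \<Longrightarrow> enc_occ U q \<Longrightarrow> agent_enc (n - {s}) U q \<and> prob_enc (ran \<sigma>) U q"
  using wf_frame unfolding well_formed_def by auto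

lemma wf_keys:
  "Enc a K R \<in> FS \<Longrightarrow> s \<notin> names K \<and> s \<notin> names R"
  "Enca a K R \<in> FS \<Longrightarrow> s \<notin> names K \<and> s \<notin> names R"
  "Sign a K \<in> FS \<Longrightarrow> s \<notin> names K"
  "Pub a \<in> FS \<Longrightarrow> s \<notin> names a"
  "Priv a \<in> FS \<Longrightarrow> s \<notin> names a"
  using wf_frame unfolding well_formed_def by auto

lemma frame_subterm_not_destructor: "w \<in> FS \<Longrightarrow> \<not> is_destructor w"
  using wf_frame unfolding well_formed_def by auto

definition is_randomness :: "trm \<Rightarrow> bool" where
  "is_randomness w \<longleftrightarrow> (\<exists>U\<in>ran \<sigma>. \<exists>q. enc_occ U q \<and> subterm_at U (q @ [3]) = Some w)"

lemma well_formed_fun_upd: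
  assumes z: "z \<notin> dom \<sigma>" and w: "w \<in> FS" "\<not> is_randomness w"
  shows "well_formed (n, \<sigma>(z \<mapsto> w)) s"
proof -
  have ran': "ran (\<sigma>(z \<mapsto> w)) = insert w (ran \<sigma>)"
    using z by (simp add: domIff)
  obtain v0 q0 where v0: "v0 \<in> ran \<sigma>" "subterm_at v0 q0 = Some w"
    using w(1) unfolding frame_subterms_iff by auto
  have "agent_enc (n - {s}) U q \<and> prob_enc (ran (\<sigma>(z \<mapsto> w))) U q"
    if U: "U \<in> ran (\<sigma>(z \<mapsto> w))" and occ: "enc_occ U q" for U q
  proof (cases "U \<in> ran \<sigma>")
    case True
    then have "agent_enc (n - {s}) U q" "prob_enc (ran \<sigma>) U q"
      using wf_enc occ by auto
    moreover have "subterm_at U (q @ [3]) \<noteq> Some w"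
      using w(2) True occ unfolding is_randomness_def by blast
    ultimately show ?thesis using prob_enc_insert_subterm[OF _ v0] ran' by simp
  next
    case False
    then have Uw: "U = w" using U ran' by simp
    then have "agent_enc (n - {s}) v0 (q0 @ q) \<and> prob_enc (ran \<sigma>) v0 (q0 @ q)"
      using wf_enc[OF v0(1)] occ enc_occ_shift[OF v0(2)] by simp
    then have "agent_enc (n - {s}) w q" "prob_enc (ran \<sigma>) w q"
      using agent_enc_shift[OF v0(2)] prob_enc_shift[OF v0(2)] by simp_all
    moreover have "subterm_at w (q @ [3]) \<noteq> Some w"
      using size_subterm_at_less by fastforce
    ultimately show ?thesis using prob_enc_insert_subterm[OF _ v0] ran' Uw by simp
  qed
  then show ?thesis
    using wf_frame frame_subterms_fun_upd[OF w(1) z] unfolding well_formed_def by simp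
qed

lemma ded_fun_upd:
  assumes fresh: "z \<notin> dom \<sigma>" "\<forall>v\<in>ran \<sigma>. z \<notin> vars v" "z \<notin> vars w"
    and ded_w: "ded (n, \<sigma>) (app \<sigma> w)"
  shows "ded (n, \<sigma>(z \<mapsto> w)) W \<longleftrightarrow> ded (n, \<sigma>) W"
proof
  have app_upd: "x \<in> dom \<sigma> \<Longrightarrow> app (\<sigma>(z \<mapsto> w)) (Var x) = app \<sigma> (Var x)" for x
    using app_fun_upd_fresh[OF fresh acyclic, of "Var x"] fresh(1) by (auto simp del: fun_upd_apply)
  show "ded (n, \<sigma>) W" if "ded (n, \<sigma>(z \<mapsto> w)) W"
    using that
  proof (induction "(n, \<sigma>(z \<mapsto> w))" W rule: ded.induct)
    case (ded_var x)
    then show ?case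
      using ded.ded_var[of x "(n, \<sigma>)"] ded_w app_upd app_fun_upd_fresh_Var[OF fresh acyclic]
      by (cases "x = z") auto
  qed (auto intro: ded.intros)
  show "ded (n, \<sigma>(z \<mapsto> w)) W" if "ded (n, \<sigma>) W"
    using that
  proof (induction "(n, \<sigma>)" W rule: ded.induct)
    case (ded_var x)
    then show ?case using ded.ded_var[of x "(n, \<sigma>(z \<mapsto> w))"] app_upd by auto
  qed (auto intro: ded.intros)
qed

end

section \<open>Injectivity of the replacement\<close>

context secret_frame
begin

lemma app_Var_eq_Nm_ran:
  assumes "x \<in> dom \<sigma>" "app \<sigma> (Var x) = Nm r"
  shows "Nm r \<in> ran \<sigma>"
proof -
  obtain y v where "\<sigma> y = Some v" "v \<notin> Var ` dom \<sigma>" "app \<sigma> (Var x) = app \<sigma> v"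
    using app_Var_in_domE[OF acyclic assms(1)] .
  then show ?thesis using assms(2) app_eq_NmD by (metis ranI)
qed

definition representative :: "trm \<Rightarrow> bool" where
  "representative w \<longleftrightarrow> w \<in> FS \<or> recipe (n, \<sigma>) w"

lemma representative_arg: "representative w \<Longrightarrow> a \<in> set (args w) \<Longrightarrow> representative a"
  unfolding representative_def using frame_subterms_arg recipe_arg by blast

text \<open>The terms on which \<open>[s/M]\<close> is injective. Deducibility, or absence of \<open>s\<close> from the
  representative, is what is inherited by the arguments; plaintexts of frame encryptions are the
  only arguments that may lose it.\<close>

definition safe :: "trm \<Rightarrow> bool" where
  "safe t \<longleftrightarrow> (\<exists>w. t = app \<sigma> w \<and> representative w \<and> (ded (n, \<sigma>) t \<or> s \<notin> names w))"

lemma safe_app_recipe: "recipe (n, \<sigma>) w \<Longrightarrow> safe (app \<sigma> w)"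
  unfolding safe_def representative_def using ded_app_recipe by blast

lemma safeE:
  assumes "safe t"
  obtains w where "t = app \<sigma> w" "representative w" "ded (n, \<sigma>) t \<or> s \<notin> names w"
    "w \<notin> Var ` dom \<sigma>"
proof -
  obtain w where w: "t = app \<sigma> w" "representative w" "ded (n, \<sigma>) t \<or> s \<notin> names w"
    using assms unfolding safe_def by blast
  show thesis
  proof (cases "w \<in> Var ` dom \<sigma>")
    case True
    then obtain x where x: "w = Var x" "x \<in> dom \<sigma>" by auto
    then obtain y v where v: "\<sigma> y = Some v" "v \<notin> Var ` dom \<sigma>" "app \<sigma> (Var x) = app \<sigma> v"
      using app_Var_in_domE[OF acyclic] by blast
    have "ded (n, \<sigma>) t" using ded_var[of x "(n, \<sigma>)"] x w(1) by simp
    moreover have "representative v"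
      using v(1) ran_subset_frame_subterms[of "(n, \<sigma>)"] unfolding representative_def
      by (auto intro: ranI)
    ultimately show thesis using that v w(1) x(1) by simp
  qed (use that w in blast)
qed

lemma safe_not_secret:
  assumes "safe t"
  shows "t \<noteq> Nm s"
proof
  assume t: "t = Nm s"
  obtain w where w: "t = app \<sigma> w" "ded (n, \<sigma>) t \<or> s \<notin> names w" "w \<notin> Var ` dom \<sigma>"
    using assms by (rule safeE)
  then have "w = Nm s" using t app_eq_NmD by blast
  then show False using w(2) t s_not_ded by simp
qed

lemma repl_eq_safe:
  assumes "safe t1" "safe t2" "repl s M t1 = repl s M t2"
  shows "length (args t1) = length (args t2)" "set_args t1 (args t2) = t2"
    "i < length (args t1) \<Longrightarrow> repl s M (args t1 ! i) = repl s M (args t2 ! i)"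
    "is_encryption t2 = is_encryption t1"
proof -
  have heads: "length (args t1) = length (args t2) \<and> set_args t1 (args t2) = t2 \<and>
      map (repl s M) (args t1) = map (repl s M) (args t2)"
    using repl_eq_same_head[OF safe_not_secret[OF assms(1)] safe_not_secret[OF assms(2)] assms(3)] .
  then show "length (args t1) = length (args t2)" "set_args t1 (args t2) = t2" by simp_all
  show "i < length (args t1) \<Longrightarrow> repl s M (args t1 ! i) = repl s M (args t2 ! i)"
    using heads nth_map[of i "args t1" "repl s M"] nth_map[of i "args t2" "repl s M"] by simp
  show "is_encryption t2 = is_encryption t1"
    using heads is_encryption_set_args[of "args t2" t1] by simp
qed

lemma frame_subterm_arg_ded_or_fresh:
  assumes "w \<in> FS" "ded (n, \<sigma>) (app \<sigma> w)" "i < length (args w)" "\<not> (is_encryption w \<and> i = 0)"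
  shows "ded (n, \<sigma>) (app \<sigma> (args w ! i)) \<or> s \<notin> names (args w ! i)"
proof (cases w)
  case (Pair a b)
  then have "ded (n, \<sigma>) (Pair (app \<sigma> a) (app \<sigma> b))" using assms(2) by simp
  then have "ded (n, \<sigma>) (app \<sigma> a)" "ded (n, \<sigma>) (app \<sigma> b)"
    by (rule ded_Pair_fst, rule ded_Pair_snd)
  then show ?thesis using Pair assms(3) by (auto simp: less_Suc_eq)
next
  case (Sign a b)
  then have "ded (n, \<sigma>) (Sign (app \<sigma> a) (app \<sigma> b))" using assms(2) by simp
  then have "ded (n, \<sigma>) (app \<sigma> a)" by (rule ded_Sign_msg)
  moreover have "s \<notin> names b" using Sign assms(1) wf_keys(3) by simp
  ultimately show ?thesis using Sign assms(3) by (auto simp: less_Suc_eq)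
next
  case (Enc a b c)
  then have "s \<notin> names b" "s \<notin> names c" "i \<noteq> 0"
    using assms(1,4) wf_keys(1) by (simp_all add: is_encryption_def)
  then show ?thesis using Enc assms(3) by (auto simp: less_Suc_eq)
next
  case (Enca a b c)
  then have "s \<notin> names b" "s \<notin> names c" "i \<noteq> 0"
    using assms(1,4) wf_keys(2) by (simp_all add: is_encryption_def)
  then show ?thesis using Enca assms(3) by (auto simp: less_Suc_eq)
next
  case (Pub a)
  then show ?thesis using assms(1,3) wf_keys(4) by simp
next
  case (Priv a)
  then show ?thesis using assms(1,3) wf_keys(5) by simp
qed (use assms(3) frame_subterm_not_destructor[OF assms(1)] in simp_all)

lemma safe_arg:
  assumes "safe t" "i < length (args t)" "\<not> (is_encryption t \<and> i = 0)"
  shows "safe (args t ! i)"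
proof -
  obtain w where w: "t = app \<sigma> w" "representative w" "ded (n, \<sigma>) t \<or> s \<notin> names w"
    "w \<notin> Var ` dom \<sigma>"
    using assms(1) by (rule safeE)
  have args: "args t = map (app \<sigma>) (args w)" using args_app w(1,4) by blast
  have i: "i < length (args w)" using assms(2) args by simp
  have enc: "\<not> (is_encryption w \<and> i = 0)" using assms(3) is_encryption_app w(1,4) by blast
  let ?a = "args w ! i"
  have a: "?a \<in> set (args w)" using i by simp
  have "ded (n, \<sigma>) (app \<sigma> ?a) \<or> s \<notin> names ?a"
  proof (cases "s \<in> names w")
    case True
    with w(3) have ded_t: "ded (n, \<sigma>) (app \<sigma> w)" using w(1) by blast
    show ?thesis
    proof (cases "recipe (n, \<sigma>) w")
      case True
      then show ?thesis using recipe_arg[OF _ a] ded_app_recipe by blast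
    next
      case False
      then have "w \<in> FS" using w(2) unfolding representative_def by blast
      then show ?thesis using frame_subterm_arg_ded_or_fresh ded_t i enc by blast
    qed
  qed (use names_arg[OF a] in blast)
  then show ?thesis
    unfolding safe_def using representative_arg[OF w(2) a] args i by auto
qed

lemma frame_encryption_randomness:
  assumes "w \<in> FS" "is_encryption w"
  obtains v q r where "v \<in> ran \<sigma>" "subterm_at v q = Some w" "prob_enc (ran \<sigma>) v q"
    "r \<in> n - {s}" "args w ! 2 = Nm r" "subterm_at v (q @ [3]) = Some (Nm r)"
proof -
  obtain v q where v: "v \<in> ran \<sigma>" "subterm_at v q = Some w"
    using assms(1) unfolding frame_subterms_iff by auto
  then have "enc_occ v q" unfolding enc_occ_def using assms(2) by blast
  then have "agent_enc (n - {s}) v q" "prob_enc (ran \<sigma>) v q" using wf_enc[OF v(1)] by auto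
  then obtain r where r: "r \<in> n - {s}" "subterm_at v (q @ [3]) = Some (Nm r)"
    unfolding agent_enc_def by blast
  moreover have "subterm_at v (q @ [3]) = Some (args w ! 2)"
    using is_encryption_subterm_at_3[OF assms(2)] subterm_at_shift[OF v(2)] by simp
  ultimately show thesis using that[OF v \<open>prob_enc (ran \<sigma>) v q\<close> r(1)] r(2) by simp
qed

text \<open>An encryption taken from the frame carries an agent name \<open>r \<noteq> s\<close> as randomness, so the
  other term has randomness \<open>r\<close> too. A recipe cannot produce the restricted name \<open>r\<close>, and
  \<open>r\<close> occurs in the frame only as the randomness of this one encryption; so both terms stem from
  the same frame subterm.\<close>

lemma repl_inj_frame_encryption:
  assumes safe: "safe t1" "safe t2" and w1: "t1 = app \<sigma> w1" "w1 \<in> FS" "w1 \<notin> Var ` dom \<sigma>"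
    and enc: "is_encryption t1" and eq: "repl s M t1 = repl s M t2"
  shows "t1 = t2"
proof -
  note heads = repl_eq_safe[OF safe eq]
  have enc_w1: "is_encryption w1" using enc w1(1,3) is_encryption_app by blast
  obtain v1 q1 r where R: "v1 \<in> ran \<sigma>" "subterm_at v1 q1 = Some w1" "prob_enc (ran \<sigma>) v1 q1"
    "r \<in> n - {s}" "args w1 ! 2 = Nm r" "subterm_at v1 (q1 @ [3]) = Some (Nm r)"
    using frame_encryption_randomness[OF w1(2) enc_w1] by blast
  have len: "length (args t1) = 3" "length (args t2) = 3"
    using enc heads(1) by (auto simp: is_encryption_iff)
  have "args t1 ! 2 = Nm r"
    using R(5) args_app[OF w1(3)] w1(1) len(1) by simp
  then have "repl s M (args t2 ! 2) = Nm r"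
    using heads(3)[of 2] len R(4) by simp
  moreover have "safe (args t2 ! 2)"
    using safe_arg[OF safe(2)] len by simp
  ultimately have t2_rand: "args t2 ! 2 = Nm r"
    using repl_eq_NmD safe_not_secret by blast
  obtain w2 where w2: "t2 = app \<sigma> w2" "representative w2" "w2 \<notin> Var ` dom \<sigma>"
    using safe(2) by (rule safeE)
  have args2: "args t2 = map (app \<sigma>) (args w2)" using args_app w2(1,3) by blast
  then have w2_rand: "app \<sigma> (args w2 ! 2) = Nm r" using t2_rand len(2) by simp
  show ?thesis
  proof (cases "w2 \<in> FS")
    case True
    have "is_encryption w2"
      using heads(4) enc w2(1,3) is_encryption_app by blast
    then obtain v2 q2 r2 where R2: "v2 \<in> ran \<sigma>" "subterm_at v2 q2 = Some w2"
      "args w2 ! 2 = Nm r2" "subterm_at v2 (q2 @ [3]) = Some (Nm r2)"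
      using frame_encryption_randomness[OF True] by blast
    then have "subterm_at v2 (q2 @ [3]) = subterm_at v1 (q1 @ [3])" using R(6) w2_rand by simp
    then have "subterm_at v2 q2 = subterm_at v1 q1" using R(3) R2(1) unfolding prob_enc_def by blast
    then show ?thesis using R(2) R2(2) w1(1) w2(1) by simp
  next
    case False
    then have rcp: "recipe (n, \<sigma>) (args w2 ! 2)"
      using w2(2) recipe_arg len(2) args2 unfolding representative_def by auto
    then show ?thesis
    proof (cases "args w2 ! 2")
      case (Var x)
      then have "Nm r \<in> ran \<sigma>"
        using rcp w2_rand app_Var_eq_Nm_ran unfolding recipe_def by auto
      moreover have "subterm_at (Nm r) [] = subterm_at v1 (q1 @ [3])" using R(6) by simp
      ultimately obtain q' where "[] = q' @ [3]" using R(3) unfolding prob_enc_def by blast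
      then show ?thesis by simp
    qed (use w2_rand R(4) rcp in \<open>auto simp: recipe_def\<close>)
  qed
qed

lemma repl_inj_safe: "safe t1 \<Longrightarrow> safe t2 \<Longrightarrow> repl s M t1 = repl s M t2 \<Longrightarrow> t1 = t2"
proof (induction t1 arbitrary: t2 rule: measure_induct_rule[of size])
  case (less t1)
  note safe = less.prems(1,2) and eq = less.prems(3)
  note heads = repl_eq_safe[OF safe eq]
  obtain w1 where w1: "t1 = app \<sigma> w1" "representative w1" "w1 \<notin> Var ` dom \<sigma>"
    using safe(1) by (rule safeE)
  obtain w2 where w2: "t2 = app \<sigma> w2" "representative w2" "w2 \<notin> Var ` dom \<sigma>"
    using safe(2) by (rule safeE)
  show ?case
  proof (cases "is_encryption t1 \<and> (w1 \<in> FS \<or> w2 \<in> FS)")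
    case True
    show ?thesis
    proof (cases "w1 \<in> FS")
      case True
      then show ?thesis using repl_inj_frame_encryption[OF safe w1(1) True w1(3) _ eq]
        \<open>is_encryption t1 \<and> _\<close> by blast
    next
      case False
      then have "w2 \<in> FS" "is_encryption t2" using True heads(4) by auto
      then show ?thesis using repl_inj_frame_encryption[OF safe(2,1) w2(1) _ w2(3) _ eq[symmetric]]
        by simp
    qed
  next
    case False
    have args_safe: "safe (args t1 ! i) \<and> safe (args t2 ! i)" if i: "i < length (args t1)" for i
    proof (cases "is_encryption t1 \<and> i = 0")
      case True
      with False have "recipe (n, \<sigma>) w1" "recipe (n, \<sigma>) w2"
        using w1(2) w2(2) unfolding representative_def by auto
      moreover have "args t1 ! i = app \<sigma> (args w1 ! i)" "args t2 ! i = app \<sigma> (args w2 ! i)"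
        "args w1 ! i \<in> set (args w1)" "args w2 ! i \<in> set (args w2)"
        using i heads(1) args_app w1(1,3) w2(1,3) by auto
      ultimately show ?thesis by (metis recipe_arg safe_app_recipe)
    qed (use safe_arg safe i heads(1,4) in auto)
    have "args t1 = args t2"
    proof (rule nth_equalityI)
      fix i
      assume i: "i < length (args t1)"
      show "args t1 ! i = args t2 ! i"
        using less.IH[OF size_arg_less[OF nth_mem[OF i]]] args_safe[OF i] heads(3)[OF i] by blast
    qed (use heads(1) in simp)
    then show ?thesis using heads(2) set_args_args[of t1] by simp
  qed
qed

end

section \<open>Lifting a rewrite step\<close>

lemma destructor_free_app:
  assumes "\<forall>v\<in>ran \<sigma>. destructor_free v" "destructor_free t"
  shows "destructor_free (app \<sigma> t)"
proof -
  have step: "destructor_free (subst1 \<sigma> u)" if "destructor_free u" for u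
    using that by (induction u) (auto split: option.splits intro: assms(1)[rule_format] ranI)
  have "destructor_free ((subst1 \<sigma> ^^ j) t)" for j
    by (induction j) (auto simp: assms(2) step)
  then show ?thesis unfolding app_def .
qed

lemma app_set_args_update:
  assumes "i < length (args U)" "\<forall>a\<in>set (args U). app \<sigma>' a = app \<sigma> a"
  shows "app \<sigma>' (set_args U ((args U)[i := v])) =
    set_args (app \<sigma> U) ((args (app \<sigma> U))[i := app \<sigma>' v])"
proof -
  let ?xs = "map (app \<sigma>) (args U)"
  have ne: "args U \<noteq> []" using assms(1) by auto
  have "app \<sigma>' (set_args U ((args U)[i := v])) = set_args U (map (app \<sigma>') ((args U)[i := v]))"
    using app_args[of "set_args U ((args U)[i := v])" \<sigma>'] ne
    by (simp add: args_set_args set_args_set_args)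
  also have "map (app \<sigma>') ((args U)[i := v]) = ?xs[i := app \<sigma>' v]"
    using assms(2) by (simp add: map_update cong: map_cong)
  also have "set_args U (?xs[i := app \<sigma>' v]) = set_args (app \<sigma> U) ((args (app \<sigma> U))[i := app \<sigma>' v])"
    using app_args[OF ne, of \<sigma>] by (simp add: args_set_args set_args_set_args)
  finally show ?thesis .
qed

lemma repl_set_args_update:
  assumes "t \<noteq> Nm s" "i < length (args t)"
  shows "repl s M (set_args t ((args t)[i := v])) =
    set_args (repl s M t) ((args (repl s M t))[i := repl s M v])"
proof -
  have ne: "args t \<noteq> []" using assms(2) by auto
  have "repl s M (set_args t ((args t)[i := v])) = set_args t (map (repl s M) ((args t)[i := v]))"
    using repl_args[of "set_args t ((args t)[i := v])" s M] ne
    by (simp add: args_set_args set_args_set_args)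
  also have "\<dots> = set_args (repl s M t) ((args (repl s M t))[i := repl s M v])"
    using repl_args[OF ne, of s M] args_repl[OF assms(1)]
    by (simp add: args_set_args set_args_set_args map_update)
  finally show ?thesis .
qed

context secret_frame
begin

lemma fresh_frame_subterm:
  assumes "\<forall>v\<in>ran \<sigma>. z \<notin> vars v" "w \<in> FS"
  shows "z \<notin> vars w"
proof -
  obtain v where "v \<in> ran \<sigma>" "w \<in> subtrms v"
    using assms(2) unfolding frame_subterms_eq by auto
  then show ?thesis using assms(1) subtrms_trans unfolding vars_subtrms by blast
qed

lemma destructor_free_app_frame: "destructor_free t \<Longrightarrow> destructor_free (app \<sigma> t)"
proof (rule destructor_free_app)
  show "\<forall>v\<in>ran \<sigma>. destructor_free v"
    using frame_subterm_not_destructor frame_subterms_subtrms ran_subset_frame_subterms[of "(n, \<sigma>)"]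
    unfolding destructor_free_def by fastforce
qed

text \<open>A frame subterm may be bound to a fresh frame variable only if it is no randomness: otherwise
  the extended frame would violate probabilistic encryption.\<close>

definition liftable :: "trm \<Rightarrow> bool" where
  "liftable u \<longleftrightarrow> (\<exists>w. u = app \<sigma> w \<and> (recipe (n, \<sigma>) w \<or> w \<in> FS \<and> \<not> is_randomness w))"

text \<open>Randomness occurs only as third argument.\<close>

lemma liftable_arg:
  assumes "safe t" "j < length (args t)" "j \<noteq> 2"
  shows "liftable (args t ! j)"
proof -
  obtain w where w: "t = app \<sigma> w" "representative w" "w \<notin> Var ` dom \<sigma>"
    using assms(1) by (rule safeE)
  have args: "args t = map (app \<sigma>) (args w)" using args_app w(1,3) by blast
  then have j: "j < length (args w)" "args t ! j = app \<sigma> (args w ! j)" using assms(2) by auto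
  show ?thesis
  proof (cases "w \<in> FS")
    case True
    then obtain v q where v: "v \<in> ran \<sigma>" "subterm_at v q = Some w"
      unfolding frame_subterms_iff by auto
    then have a: "subterm_at v (q @ [Suc j]) = Some (args w ! j)"
      using j(1) by (simp add: subterm_at_append)
    then have "args w ! j \<in> FS" using v(1) unfolding frame_subterms_iff by auto
    moreover have "\<not> is_randomness (args w ! j)"
    proof
      assume "is_randomness (args w ! j)"
      then obtain U q' where "U \<in> ran \<sigma>" "enc_occ U q'" "subterm_at U (q' @ [3]) = Some (args w ! j)"
        unfolding is_randomness_def by blast
      then have "prob_enc (ran \<sigma>) U q'" using wf_enc by blast
      then obtain q'' where "q @ [Suc j] = q'' @ [3]"
        using a v(1) \<open>subterm_at U (q' @ [3]) = Some (args w ! j)\<close> unfolding prob_enc_def by force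
      then show False using assms(3) by simp
    qed
    ultimately show ?thesis unfolding liftable_def using j(2) by blast
  next
    case False
    then have "recipe (n, \<sigma>) (args w ! j)"
      using w(2) recipe_arg j(1) unfolding representative_def by auto
    then show ?thesis unfolding liftable_def using j(2) by blast
  qed
qed

lemma safe_destructor_arg:
  assumes "safe t" "is_destructor t" "i < length (args t)"
  shows "safe (args t ! i)"
proof -
  have "\<not> is_encryption t" using assms(2) by (auto simp: is_encryption_iff)
  then show ?thesis using safe_arg assms(1,3) by blast
qed

lemma safe_repl_eq_constructorD:
  assumes "safe t"
  shows
  "repl s M t = Pair x y \<Longrightarrow> \<exists>a b. t = Pair a b \<and> repl s M a = x \<and> repl s M b = y"
  "repl s M t = Enc x y z \<Longrightarrow> \<exists>a b c. t = Enc a b c \<and> repl s M a = x \<and> repl s M b = y"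
  "repl s M t = Enca x y z \<Longrightarrow> \<exists>a b c. t = Enca a b c \<and> repl s M a = x \<and> repl s M b = y"
  "repl s M t = Pub x \<Longrightarrow> \<exists>a. t = Pub a \<and> repl s M a = x"
  "repl s M t = Priv x \<Longrightarrow> \<exists>a. t = Priv a \<and> repl s M a = x"
  "repl s M t = Sign x y \<Longrightarrow> \<exists>a b. t = Sign a b \<and> repl s M a = x \<and> repl s M b = y"
  using repl_eq_constructorD[OF safe_not_secret[OF assms]] by blast+

text \<open>The equalities between subterms that a rule requires transfer back along \<open>[s/M]\<close> by
  injectivity.\<close>

lemma lift_root_step:
  assumes U: "recipe (n, \<sigma>) U" and root: "rroot (repl s M (app \<sigma> U)) V"
  shows "\<exists>u. rroot (app \<sigma> U) u \<and> V = repl s M u \<and> liftable u"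
proof -
  let ?T = "app \<sigma> U"
  have T: "safe ?T" using safe_app_recipe[OF U] .
  have "is_destructor ?T"
    using rroot_is_destructor[OF root] is_destructor_repl[OF safe_not_secret[OF T]] by simp
  then have arg: "safe (args ?T ! i)" if "i < length (args ?T)" for i
    using safe_destructor_arg T that by blast
  note T_split = repl_eq_constructorD[OF safe_not_secret[OF T]]
  from root show ?thesis
  proof cases
    case (1 b)
    then obtain A where A: "?T = Pi1 A" "repl s M A = Pair V b" using T_split(7) by blast
    have "safe A" using arg[of 0] A(1) by simp
    then obtain a b' where "A = Pair a b'" "repl s M a = V"
      using safe_repl_eq_constructorD(1) A(2) by blast
    moreover have "liftable a" using liftable_arg[OF \<open>safe A\<close>, of 0] \<open>A = Pair a b'\<close> by simp
    ultimately show ?thesis using A by (auto intro!: exI[of _ a] rroot.intros)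
  next
    case (2 a)
    then obtain A where A: "?T = Pi2 A" "repl s M A = Pair a V" using T_split(8) by blast
    have "safe A" using arg[of 0] A(1) by simp
    then obtain a' b where "A = Pair a' b" "repl s M b = V"
      using safe_repl_eq_constructorD(1) A(2) by blast
    moreover have "liftable b" using liftable_arg[OF \<open>safe A\<close>, of 1] \<open>A = Pair a' b\<close> by simp
    ultimately show ?thesis using A by (auto intro!: exI[of _ b] rroot.intros)
  next
    case (3 k r)
    then obtain A B where AB: "?T = Dec A B" "repl s M A = Enc V k r" "repl s M B = k"
      using T_split(10) by blast
    have "safe A" "safe B" using arg[of 0] arg[of 1] AB(1) by simp_all
    then obtain a K r' where A: "A = Enc a K r'" "repl s M a = V" "repl s M K = k"
      using safe_repl_eq_constructorD(2) AB(2) by blast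
    have "safe K" using safe_arg[OF \<open>safe A\<close>, of 1] A(1) by (simp add: is_encryption_def)
    then have "K = B" using repl_inj_safe[where M = M, OF \<open>safe K\<close> \<open>safe B\<close>] A(3) AB(3) by simp
    moreover have "liftable a" using liftable_arg[OF \<open>safe A\<close>, of 0] A(1) by simp
    ultimately show ?thesis using AB(1) A by (auto intro!: exI[of _ a] rroot.intros)
  next
    case (4 k r)
    then obtain A B where AB: "?T = Deca A B" "repl s M A = Enca V (Pub k) r" "repl s M B = Priv k"
      using T_split(11) by blast
    have "safe A" "safe B" using arg[of 0] arg[of 1] AB(1) by simp_all
    then obtain a P r' where A: "A = Enca a P r'" "repl s M a = V" "repl s M P = Pub k"
      using safe_repl_eq_constructorD(3) AB(2) by blast
    have "safe P" using safe_arg[OF \<open>safe A\<close>, of 1] A(1) by (simp add: is_encryption_def)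
    then obtain K where K: "P = Pub K" "repl s M K = k"
      using safe_repl_eq_constructorD(4) A(3) by blast
    obtain K' where K': "B = Priv K'" "repl s M K' = k"
      using safe_repl_eq_constructorD(5) \<open>safe B\<close> AB(3) by blast
    have "safe K" "safe K'"
      using safe_arg[OF \<open>safe P\<close>, of 0] safe_arg[OF \<open>safe B\<close>, of 0] K K'
      by (simp_all add: is_encryption_def)
    then have "K = K'" using repl_inj_safe[where M = M] K(2) K'(2) by blast
    moreover have "liftable a" using liftable_arg[OF \<open>safe A\<close>, of 0] A(1) by simp
    ultimately show ?thesis using AB(1) A K K' by (auto intro!: exI[of _ a] rroot.intros)
  next
    case (5 m k)
    then obtain A B C where ABC: "?T = Check A B C" "repl s M A = m"
        "repl s M B = Sign m (Priv k)" "repl s M C = Pub k"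
      using T_split(12) by blast
    have "safe A" "safe B" "safe C" using arg[of 0] arg[of 1] arg[of 2] ABC(1) by simp_all
    then obtain m' P where B: "B = Sign m' P" "repl s M m' = m" "repl s M P = Priv k"
      using safe_repl_eq_constructorD(6) ABC(3) by blast
    have "safe m'" "safe P"
      using safe_arg[OF \<open>safe B\<close>, of 0] safe_arg[OF \<open>safe B\<close>, of 1] B(1)
      by (simp_all add: is_encryption_def)
    then obtain K where K: "P = Priv K" "repl s M K = k"
      using safe_repl_eq_constructorD(5) B(3) by blast
    obtain K' where K': "C = Pub K'" "repl s M K' = k"
      using safe_repl_eq_constructorD(4) \<open>safe C\<close> ABC(4) by blast
    have "safe K" "safe K'"
      using safe_arg[OF \<open>safe P\<close>, of 0] safe_arg[OF \<open>safe C\<close>, of 0] K K'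
      by (simp_all add: is_encryption_def)
    then have "K = K'" using repl_inj_safe[where M = M] K(2) K'(2) by blast
    moreover have "A = m'" using repl_inj_safe[where M = M, OF \<open>safe A\<close> \<open>safe m'\<close>] ABC(2) B(2) by simp
    moreover have "liftable ok"
      unfolding liftable_def ok_def recipe_def by (intro exI[of _ "Cst ''ok''"]) simp
    ultimately show ?thesis using ABC(1) B K K' 5(2) by (auto intro!: exI[of _ ok] rroot.intros)
  next
    case (6 k)
    then obtain A where A: "?T = Retrieve A" "repl s M A = Sign V k" using T_split(9) by blast
    have "safe A" using arg[of 0] A(1) by simp
    then obtain a b where "A = Sign a b" "repl s M a = V"
      using safe_repl_eq_constructorD(6) A(2) by blast
    moreover have "liftable a" using liftable_arg[OF \<open>safe A\<close>, of 0] \<open>A = Sign a b\<close> by simp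
    ultimately show ?thesis using A by (auto intro!: exI[of _ a] rroot.intros)
  qed
qed

definition step_extension :: "var \<Rightarrow> subst \<Rightarrow> bool" where
  "step_extension z \<sigma>' \<longleftrightarrow> \<sigma>' = \<sigma> \<or>
     (\<exists>w. \<sigma>' = \<sigma>(z \<mapsto> w) \<and> w \<in> FS \<and> \<not> is_randomness w \<and> ded (n, \<sigma>) (app \<sigma> w))"

context
  fixes z :: var
  assumes fresh_dom: "z \<notin> dom \<sigma>" and fresh_ran: "\<forall>v\<in>ran \<sigma>. z \<notin> vars v"
begin

lemma app_step_extension:
  assumes "step_extension z \<sigma>'" "vars t \<subseteq> dom \<sigma>"
  shows "app \<sigma>' t = app \<sigma> t"
proof -
  have "z \<notin> vars t" using assms(2) fresh_dom by blast
  then show ?thesis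
    using assms(1) app_fun_upd_fresh[OF fresh_dom fresh_ran _ acyclic] fresh_frame_subterm[OF fresh_ran]
    unfolding step_extension_def by auto
qed

lemma step_extension_sound:
  assumes "step_extension z \<sigma>'"
  shows "is_frame (n, \<sigma>') \<and> well_formed (n, \<sigma>') s \<and>
    (\<forall>x\<in>dom \<sigma>. app \<sigma>' (Var x) = app \<sigma> (Var x)) \<and> (\<forall>W. ded (n, \<sigma>) W \<longleftrightarrow> ded (n, \<sigma>') W)"
  using assms unfolding step_extension_def
proof
  assume "\<sigma>' = \<sigma>"
  then show ?thesis using frame wf_frame by simp
next
  assume "\<exists>w. \<sigma>' = \<sigma>(z \<mapsto> w) \<and> w \<in> FS \<and> \<not> is_randomness w \<and> ded (n, \<sigma>) (app \<sigma> w)"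
  then obtain w where w: "\<sigma>' = \<sigma>(z \<mapsto> w)" "w \<in> FS" "\<not> is_randomness w" "ded (n, \<sigma>) (app \<sigma> w)"
    by blast
  have fresh_w: "z \<notin> vars w" using fresh_frame_subterm[OF fresh_ran w(2)] .
  have "is_frame (n, \<sigma>')"
    using frame acyclic_subst_fun_upd[OF acyclic fresh_dom fresh_ran fresh_w] w(1)
    unfolding is_frame_iff by simp
  moreover have "well_formed (n, \<sigma>') s"
    using well_formed_fun_upd[OF fresh_dom w(2,3)] w(1) by simp
  moreover have "\<forall>x\<in>dom \<sigma>. app \<sigma>' (Var x) = app \<sigma> (Var x)"
    using app_step_extension[OF assms] by simp
  moreover have "\<forall>W. ded (n, \<sigma>) W \<longleftrightarrow> ded (n, \<sigma>') W"
    using ded_fun_upd[OF fresh_dom fresh_ran fresh_w w(4)] w(1) by simp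
  ultimately show ?thesis by (intro conjI)
qed

lemma lift_step:
  assumes "normal_form M"
  shows "recipe (n, \<sigma>) U \<Longrightarrow> rstep (repl s M (app \<sigma> U)) V \<Longrightarrow>
    \<exists>\<sigma>' V'. step_extension z \<sigma>' \<and> public (n, \<sigma>) V' \<and> rstep (app \<sigma> U) (app \<sigma>' V') \<and>
      V = repl s M (app \<sigma>' V')"
proof (induction U arbitrary: V rule: measure_induct_rule[of size])
  case (less U)
  note U = less.prems(1) and step = less.prems(2)
  have ext_refl: "step_extension z \<sigma>" unfolding step_extension_def by simp
  show ?case
  proof (cases "args U = []")
    case True
    then have "destructor_free (app \<sigma> U)"
      using destructor_free_app_frame by (cases U) auto
    then show ?thesis using destructor_free_repl_irreducible[OF _ assms] step by blast
  next
    case args: False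
    let ?T = "app \<sigma> U"
    have T: "safe ?T" using safe_app_recipe[OF U] .
    from step consider "rroot (repl s M ?T) V"
      | i a' where "i < length (args (repl s M ?T))" "rstep (args (repl s M ?T) ! i) a'"
          "V = set_args (repl s M ?T) ((args (repl s M ?T))[i := a'])"
      using rstep_iff by blast
    then show ?thesis
    proof cases
      case 1
      then obtain u w where u: "rroot ?T u" "V = repl s M u" "u = app \<sigma> w"
          and w: "recipe (n, \<sigma>) w \<or> w \<in> FS \<and> \<not> is_randomness w"
        using lift_root_step[OF U] unfolding liftable_def by blast
      have "rstep ?T u" using rroot_rstep[OF u(1)] .
      show ?thesis
      proof (cases "recipe (n, \<sigma>) w")
        case True
        then show ?thesis using ext_refl \<open>rstep ?T u\<close> u unfolding recipe_def by blast
      next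
        case False
        then have "w \<in> FS" "\<not> is_randomness w" using w by auto
        moreover have "ded (n, \<sigma>) (app \<sigma> w)"
          using ded_eq[OF ded_app_recipe[OF U] rroot_eqE[OF u(1)]] u(3) by simp
        ultimately have "step_extension z (\<sigma>(z \<mapsto> w))"
          unfolding step_extension_def by blast
        moreover have "app (\<sigma>(z \<mapsto> w)) (Var z) = u"
          using app_fun_upd_fresh_Var[OF fresh_dom fresh_ran
              fresh_frame_subterm[OF fresh_ran \<open>w \<in> FS\<close>] acyclic] u(3) by simp
        ultimately show ?thesis using \<open>rstep ?T u\<close> u(2) public_simps(1) by metis
      qed
    next
      case (2 i a')
      have nT: "?T \<noteq> Nm s" using safe_not_secret[OF T] .
      have args_T: "args ?T = map (app \<sigma>) (args U)" using args_app[of U \<sigma>] args by (cases U) auto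
      have i: "i < length (args U)" "args U ! i \<in> set (args U)"
        using 2(1) args_repl[OF nT] args_T by auto
      have "rstep (repl s M (app \<sigma> (args U ! i))) a'"
        using 2(2) args_repl[OF nT] args_T i(1) by simp
      then obtain \<sigma>' Vi where IH: "step_extension z \<sigma>'" "public (n, \<sigma>) Vi"
          "rstep (app \<sigma> (args U ! i)) (app \<sigma>' Vi)" "a' = repl s M (app \<sigma>' Vi)"
        using less.IH[OF size_arg_less[OF i(2)] recipe_arg[OF U i(2)]] by blast
      let ?V' = "set_args U ((args U)[i := Vi])"
      have "\<forall>a\<in>set (args U). app \<sigma>' a = app \<sigma> a"
      proof
        fix a
        assume "a \<in> set (args U)"
        then have "vars a \<subseteq> dom \<sigma>" using recipe_arg[OF U] unfolding recipe_def by simp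
        then show "app \<sigma>' a = app \<sigma> a" by (rule app_step_extension[OF IH(1)])
      qed
      then have app_V': "app \<sigma>' ?V' = set_args ?T ((args ?T)[i := app \<sigma>' Vi])"
        using app_set_args_update[OF i(1)] by simp
      have "rstep ?T (app \<sigma>' ?V')"
        using rstep_arg[of i ?T] IH(3) args_T i(1) app_V' by simp
      moreover have "V = repl s M (app \<sigma>' ?V')"
        using 2(3) IH(4) app_V' repl_set_args_update[OF nT] args_T i(1) by simp
      moreover have "public (n, \<sigma>) ?V'"
      proof (rule public_set_args)
        show U_pub: "public (n, \<sigma>) U" using U unfolding recipe_def by simp
        show "\<forall>y\<in>set ((args U)[i := Vi]). public (n, \<sigma>) y"
          using set_update_subset_insert[of "args U" i Vi] IH(2) public_arg[OF U_pub] by blast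
      qed simp
      ultimately show ?thesis using IH(1) by blast
    qed
  qed
qed

end

end

theorem lemma2p8:
  fixes n :: "name set" and \<sigma> :: subst and s :: name and U M V :: trm
  assumes "is_frame (n, \<sigma>)"
    and "s \<in> n"
    and "well_formed (n, \<sigma>) s"
    and "\<not> ded (n, \<sigma>) (Nm s)"
    and "vars U \<subseteq> dom \<sigma>"
    and "closed M" and "normal_form M"
    and "public (n, \<sigma>) U" and "public (n, \<sigma>) M"
    and "rstep (repl s M (app \<sigma> U)) V"
  shows "\<exists>\<sigma>'. is_frame (n, \<sigma>') \<and> well_formed (n, \<sigma>') s \<and>
           (\<forall>x \<in> dom \<sigma>. app \<sigma>' (Var x) = app \<sigma> (Var x)) \<and>
           (\<forall>W. ded (n, \<sigma>) W \<longleftrightarrow> ded (n, \<sigma>') W) \<and>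
           (\<exists>V'. public (n, \<sigma>') V' \<and> V = repl s M (app \<sigma>' V') \<and>
                 rstep (app \<sigma> U) (app \<sigma>' V'))"
proof -
  interpret secret_frame n \<sigma> s
    using assms(1-4) by unfold_locales
  have "finite (dom \<sigma> \<union> (\<Union>v\<in>ran \<sigma>. vars v))"
    using acyclic unfolding acyclic_subst_def by (simp add: finite_ran finite_vars)
  then obtain z where "z \<notin> dom \<sigma> \<union> (\<Union>v\<in>ran \<sigma>. vars v)"
    using ex_new_if_finite[OF infinite_UNIV_nat] by blast
  then have z: "z \<notin> dom \<sigma>" "\<forall>v\<in>ran \<sigma>. z \<notin> vars v" by auto
  have "recipe (n, \<sigma>) U" using assms(5,8) unfolding recipe_def by simp
  then obtain \<sigma>' V' where \<sigma>': "step_extension z \<sigma>'" and V': "public (n, \<sigma>) V'"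
      "rstep (app \<sigma> U) (app \<sigma>' V')" "V = repl s M (app \<sigma>' V')"
    using lift_step[OF z assms(7)] assms(10) by blast
  have "public (n, \<sigma>') V'" using V'(1) unfolding public_def by simp
  moreover note step_extension_sound[OF z \<sigma>']
  ultimately show ?thesis using V'(2,3) by (intro exI[of _ \<sigma>'] exI[of _ V'] conjI) auto
qed

end
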